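(* In the setting described in the context, let $i,j,k \in \{0,1,\dots,q\}$ be pairwise distinct with $k \geq 1$. Then there exists a constant $C$ (independent of $\gamma$ and $\lambda_0$) such that for every $\gamma \in (0,\frac12)$ there exists $\bar\lambda$ such that for all $\lambda_0 \geq \bar\lambda$, all $p \in \mathbb{R}^n$ and all $\lambda_0^{-1} \leq r \leq 1$, \begin{align*} &\big|\Omega \cap \{\hat u_k = 0\} \cap \{-2\lambda_k^{-1} \leq \hat u_{k-1} \leq 0\} \cap \{-2\lambda_k^{-1} \leq u_k \leq 0\} \\ &\quad \cap \{-4\lambda_0^{-1} \leq u_j \leq 0\} \cap \{-6\lambda_0^{-1} \leq u_i \leq 0\} \cap B_r(p)\big| \leq C \lambda_k^{-1}\lambda_0^{-1} r^{n-3}, \end{align*} where $|\cdot|$ denotes $(n-1)$-dimensional Hausdorff measure and $B_r(p)$ is the Euclidean ball of radius $r$ centered at $p$.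
   Context: $n\ge3$; $u_0,\dots,u_q$ are non-constant linear (affine) functions on $\mathbb{R}^n$ and $\Omega=\bigcap_{m=0}^q\{u_m\le 0\}$ is a compact convex polytope with non-empty interior, such that: (a) for each $k$, $\{u_k>0\}\cap\bigcap_{m\neq k}\{u_m\le0\}\neq\emptyset$; (b) the Euclidean gradient of each $u_k$ is a unit vector $N_k$; (c) for $j<k$, if some $x\in\Omega$ has $u_j(x)=u_k(x)=0$ then $\langle N_j,N_k\rangle\le0$. Fix a smooth even $\eta:\mathbb{R}\to\mathbb{R}$ with $\eta(t)=|t|$ for $|t|\ge\frac12$ and $\eta''\ge0$. For $\gamma\in(0,\frac12)$, $\lambda_0>1$ put $\lambda_k=\gamma^{-k}\lambda_0$, $\hat u_0=u_0$, $\hat u_k=\frac12\big(\hat u_{k-1}+u_k+\lambda_k^{-1}\eta(\lambda_k(\hat u_{k-1}-u_k))\big)$ for $1\le k\le q$. *)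

theory Defs
  imports "HOL-Analysis.Analysis"
begin

definition hausdorff_const :: "real \<Rightarrow> real" where
  "hausdorff_const s = pi powr (s / 2) / Gamma (s / 2 + 1)"

definition hausdorff_pre :: "real \<Rightarrow> real \<Rightarrow> 'a::metric_space set \<Rightarrow> ennreal" where
  "hausdorff_pre s \<delta> A =
     (INF C \<in> {C :: nat \<Rightarrow> 'a set. A \<subseteq> (\<Union>i. C i) \<and> (\<forall>i. bounded (C i) \<and> diameter (C i) \<le> \<delta>)}.
        (\<Sum>i. ennreal (hausdorff_const s * (diameter (C i) / 2) powr s)))"

definition hausdorff_measure :: "real \<Rightarrow> 'a::metric_space set \<Rightarrow> ennreal" where
  "hausdorff_measure s A = (SUP \<delta> \<in> {0<..}. hausdorff_pre s \<delta> A)"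

definition lam :: "real \<Rightarrow> real \<Rightarrow> nat \<Rightarrow> real" where
  "lam \<gamma> lam0 k = lam0 / \<gamma> ^ k"

fun uhat :: "(real \<Rightarrow> real) \<Rightarrow> real \<Rightarrow> real \<Rightarrow> (nat \<Rightarrow> 'a \<Rightarrow> real) \<Rightarrow> nat \<Rightarrow> 'a \<Rightarrow> real" where
  "uhat \<eta> \<gamma> lam0 u 0 x = u 0 x"
| "uhat \<eta> \<gamma> lam0 u (Suc k) x =
     (uhat \<eta> \<gamma> lam0 u k x + u (Suc k) x
      + \<eta> (lam \<gamma> lam0 (Suc k) * (uhat \<eta> \<gamma> lam0 u k x - u (Suc k) x)) / lam \<gamma> lam0 (Suc k)) / 2"

end

theory Submission
  imports Defs
begin

text \<open>If facets \<open>i\<close>, \<open>j\<close>, \<open>k\<close> have no common point in \<open>\<Omega>\<close>, compactness makes the set empty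
  for large \<open>lam0\<close>. Otherwise \<open>N i\<close>, \<open>N j\<close>, \<open>N k\<close> are linearly independent, by the sign
  pattern of \<open>u i\<close>, \<open>u j\<close>, \<open>u k\<close> at an interior point and at the points of condition (a).

  By pigeonhole, at each point the \<open>q + 1\<close> values \<open>u m\<close> avoid one of \<open>q + 2\<close> windows of
  width \<open>g\<close>; this splits the indices into active ones (above the window) and inactive ones
  (below it) and cuts the set into finitely many pieces. On a piece the inactive functions do
  not affect \<^term>\<open>uhat \<eta> \<gamma> lam0 u (k - 1)\<close>, and some facet \<open>m < k\<close> is active. Active facets
  near facet \<open>k\<close> meet it at obtuse angles by condition (c), so there is a direction \<open>d \<bottom> N k\<close>
  along which all active \<open>u m\<close>, and hence \<open>uhat (k - 1)\<close>, grow at a fixed rate. On the level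
  set \<open>uhat k = 0\<close> the point is therefore a Lipschitz function of the coordinates
  \<open>uhat (k - 1) - u k\<close>, \<open>x \<bullet> b\<close> for a unit vector \<open>b \<bottom> d, N k\<close> in the span of \<open>N i\<close>, \<open>N j\<close>,
  \<open>N k\<close>, and \<open>DIM('a) - 3\<close> further orthonormal coordinates. They range over intervals of
  lengths \<open>O(1 / lam k)\<close>, \<open>O(1 / lam0)\<close> (as \<open>\<bar>x \<bullet> b - z \<bullet> b\<bar>\<close> is controlled by
  \<open>\<bar>u i x\<bar> + \<bar>u j x\<bar> + \<bar>u k x\<bar>\<close>) and \<open>2 r\<close>, and covering by a fine grid in these coordinates
  gives the bound.\<close>

section \<open>Smoothed maxima\<close>

lemma smooth_convex_abs_lipschitz:
  fixes \<eta> :: "real \<Rightarrow> real"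
  assumes smooth: "\<forall>m x. ((deriv ^^ m) \<eta> has_real_derivative (deriv ^^ Suc m) \<eta> x) (at x)"
    and eq_abs: "\<forall>t. \<bar>t\<bar> \<ge> 1/2 \<longrightarrow> \<eta> t = \<bar>t\<bar>"
    and convex: "\<forall>t. (deriv ^^ 2) \<eta> t \<ge> 0"
  shows "\<bar>\<eta> x - \<eta> y\<bar> \<le> \<bar>x - y\<bar>"
proof -
  have d1: "(\<eta> has_real_derivative deriv \<eta> t) (at t)" for t
    using smooth[rule_format, of 0 t] by simp
  have d2: "(deriv \<eta> has_real_derivative deriv (deriv \<eta>) t) (at t)" for t
    using smooth[rule_format, of 1 t] by simp
  have d2_nonneg: "0 \<le> deriv (deriv \<eta>) t" for t
    using convex by (simp add: numeral_2_eq_2)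
  have mono: "deriv \<eta> a \<le> deriv \<eta> b" if "a \<le> b" for a b
    using DERIV_nonneg_imp_nondecreasing[OF that] d2 d2_nonneg by blast
  have right: "deriv \<eta> t = 1" if "t > 1/2" for t
  proof -
    have "(\<eta> has_real_derivative 1) (at t)"
      by (rule has_field_derivative_transform_within_open[OF DERIV_ident, where S="{1/2<..}"])
         (use that eq_abs in auto)
    then show ?thesis using d1 DERIV_unique by blast
  qed
  have left: "deriv \<eta> t = -1" if "t < -1/2" for t
  proof -
    have "(\<eta> has_real_derivative -1) (at t)"
      by (rule has_field_derivative_transform_within_open[OF DERIV_minus[OF DERIV_ident], where S="{..<-1/2}"])
         (use that eq_abs in auto)
    then show ?thesis using d1 DERIV_unique by blast
  qed
  have bounded: "\<bar>deriv \<eta> t\<bar> \<le> 1" for t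
    using mono[of t "max t 1"] mono[of "min t (-1)" t] right[of "max t 1"] left[of "min t (-1)"] by auto
  have *: "\<bar>\<eta> b - \<eta> a\<bar> \<le> \<bar>b - a\<bar>" if ab: "a < b" for a b
  proof -
    obtain z where "\<eta> b - \<eta> a = (b - a) * deriv \<eta> z"
      using MVT2[OF ab, of \<eta> "deriv \<eta>"] d1 by blast
    then show ?thesis using bounded[of z] by (simp add: abs_mult mult_left_le)
  qed
  show ?thesis
    using *[of x y] *[of y x] by (cases x y rule: linorder_cases) (auto simp: abs_minus_commute)
qed

text \<open>\<^term>\<open>smax \<eta> l a b\<close> is the smoothed maximum of \<open>a\<close> and \<open>b\<close> at scale \<open>1/l\<close>; it is the
  recursion step of \<^const>\<open>uhat\<close>.\<close>

definition smax :: "(real \<Rightarrow> real) \<Rightarrow> real \<Rightarrow> real \<Rightarrow> real \<Rightarrow> real" where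
  "smax \<eta> l a b = (a + b + \<eta> (l * (a - b)) / l) / 2"

lemma uhat_Suc_smax:
  "uhat \<eta> \<gamma> lam0 u (Suc m) x = smax \<eta> (lam \<gamma> lam0 (Suc m)) (uhat \<eta> \<gamma> lam0 u m x) (u (Suc m) x)"
  by (simp add: smax_def)

lemma lam_ge:
  assumes "0 < lam0" "0 < \<gamma>" "\<gamma> \<le> 1"
  shows "lam0 \<le> lam \<gamma> lam0 k"
proof -
  have "\<gamma> ^ k \<le> 1" "0 < \<gamma> ^ k" using assms by (auto simp: power_le_one)
  then show ?thesis using assms unfolding lam_def by (simp add: field_simps mult_left_le)
qed

lemma lam_pos: "0 < lam0 \<Longrightarrow> 0 < \<gamma> \<Longrightarrow> \<gamma> \<le> 1 \<Longrightarrow> 0 < lam \<gamma> lam0 k"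
  using lam_ge[of lam0 \<gamma> k] by linarith

lemma divide_lam_le:
  assumes "0 < lam0" "0 < \<gamma>" "\<gamma> \<le> 1" "0 \<le> c"
  shows "c / lam \<gamma> lam0 k \<le> c / lam0"
  using lam_ge[OF assms(1-3), of k] assms(1,4) by (simp add: frac_le)

definition gap_split :: "nat \<Rightarrow> nat set \<Rightarrow> real \<Rightarrow> real \<Rightarrow> (nat \<Rightarrow> real) \<Rightarrow> bool" where
  "gap_split m P \<alpha> g v \<longleftrightarrow> (\<forall>l\<le>m. (l \<in> P \<longrightarrow> \<alpha> \<le> v l) \<and> (l \<notin> P \<longrightarrow> v l < \<alpha> - g))"

locale soft_abs =
  fixes \<eta> :: "real \<Rightarrow> real"
  assumes lipschitz: "\<bar>\<eta> x - \<eta> y\<bar> \<le> \<bar>x - y\<bar>"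
    and eq_abs: "1/2 \<le> \<bar>t\<bar> \<Longrightarrow> \<eta> t = \<bar>t\<bar>"
begin

lemma abs_le_eta: "\<bar>t\<bar> \<le> \<eta> t"
proof -
  have "\<eta> (1/2) = 1/2" "\<eta> (-1/2) = 1/2" using eq_abs[of "1/2"] eq_abs[of "-1/2"] by auto
  moreover have "\<bar>\<eta> t - \<eta> (1/2)\<bar> \<le> \<bar>t - 1/2\<bar>" "\<bar>\<eta> t - \<eta> (-1/2)\<bar> \<le> \<bar>t + 1/2\<bar>"
    using lipschitz[of t "1/2"] lipschitz[of t "-1/2"] by auto
  ultimately have "1/2 - \<bar>t - 1/2\<bar> \<le> \<eta> t" "1/2 - \<bar>t + 1/2\<bar> \<le> \<eta> t" by linarith+
  then show ?thesis using eq_abs[of t] by (cases "1/2 \<le> \<bar>t\<bar>") (auto simp: abs_if split: if_splits)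
qed

lemma eta_le_abs_plus_one: "\<eta> t \<le> \<bar>t\<bar> + 1"
proof -
  have "\<eta> (1/2) = 1/2" using eq_abs[of "1/2"] by auto
  moreover have "\<bar>\<eta> t - \<eta> (1/2)\<bar> \<le> \<bar>t - 1/2\<bar>" using lipschitz[of t "1/2"] by auto
  ultimately show ?thesis by (auto simp: abs_if split: if_splits)
qed

lemma smax_mono:
  assumes "0 < l" "a \<le> a'" "b \<le> b'"
  shows "smax \<eta> l a b \<le> smax \<eta> l a' b'"
proof -
  have "\<eta> (l * (a - b)) - \<eta> (l * (a' - b')) \<le> \<bar>l * ((a' - a) - (b' - b))\<bar>"
    using lipschitz[of "l * (a' - b')" "l * (a - b)"] by (simp add: algebra_simps)
  also have "\<dots> = l * \<bar>(a' - a) - (b' - b)\<bar>"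
    using assms(1) by (simp add: abs_mult)
  also have "\<dots> \<le> l * ((a' - a) + (b' - b))"
    using assms by (intro mult_left_mono) auto
  finally have "\<eta> (l * (a - b)) / l - \<eta> (l * (a' - b')) / l \<le> (a' - a) + (b' - b)"
    using assms(1) by (simp add: field_simps)
  then show ?thesis unfolding smax_def by (simp add: field_simps)
qed

lemma smax_add: "smax \<eta> l (a + s) (b + s) = smax \<eta> l a b + s"
  unfolding smax_def by (simp add: field_simps)

lemma max_le_smax:
  assumes "0 < l"
  shows "max a b \<le> smax \<eta> l a b"
proof -
  have "l * \<bar>a - b\<bar> \<le> \<eta> (l * (a - b))"
    using abs_le_eta[of "l * (a - b)"] assms by (simp add: abs_mult)
  then have "\<bar>a - b\<bar> \<le> \<eta> (l * (a - b)) / l" using assms by (simp add: field_simps)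
  then show ?thesis unfolding smax_def by (auto simp: abs_if max_def split: if_splits)
qed

lemma smax_le_max:
  assumes "0 < l"
  shows "smax \<eta> l a b \<le> max a b + 1 / (2 * l)"
proof -
  have "\<eta> (l * (a - b)) \<le> l * \<bar>a - b\<bar> + 1"
    using eta_le_abs_plus_one[of "l * (a - b)"] assms by (simp add: abs_mult)
  then have "\<eta> (l * (a - b)) / l \<le> \<bar>a - b\<bar> + 1 / l" using assms by (simp add: field_simps)
  then show ?thesis unfolding smax_def by (auto simp: abs_if max_def field_simps split: if_splits)
qed

lemma smax_eq_max:
  assumes "0 < l" "1 / (2 * l) \<le> \<bar>a - b\<bar>"
  shows "smax \<eta> l a b = max a b"
proof -
  have "1/2 \<le> l * \<bar>a - b\<bar>" using assms by (simp add: field_simps)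
  then have "1/2 \<le> \<bar>l * (a - b)\<bar>" using assms(1) by (simp add: abs_mult)
  then have "\<eta> (l * (a - b)) / l = \<bar>a - b\<bar>" using eq_abs assms(1) by (simp add: abs_mult)
  then show ?thesis unfolding smax_def by (auto simp: abs_if max_def)
qed

lemma smax_eq_left:
  assumes "0 < l" "1 / (2 * l) \<le> a - b"
  shows "smax \<eta> l a b = a"
proof -
  have "0 < 1 / (2 * l)" using assms(1) by simp
  then have "1 / (2 * l) \<le> \<bar>a - b\<bar>" "b \<le> a" using assms(2) by linarith+
  then show ?thesis using smax_eq_max[OF assms(1)] by (simp add: max_def)
qed

lemma smax_eq_right:
  assumes "0 < l" "1 / (2 * l) \<le> b - a"
  shows "smax \<eta> l a b = b"
proof -
  have "0 < 1 / (2 * l)" using assms(1) by simp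
  then have "1 / (2 * l) \<le> \<bar>a - b\<bar>" "a \<le> b" using assms(2) by linarith+
  then show ?thesis using smax_eq_max[OF assms(1)] by (simp add: max_def)
qed

text \<open>On a level set of \<open>smax\<close> the two arguments cannot both increase, so each of them moves by
  at most the change of their difference.\<close>

lemma smax_level_set:
  assumes "0 < l" "smax \<eta> l a b = smax \<eta> l a' b'"
  shows "\<bar>a - a'\<bar> \<le> \<bar>(a - b) - (a' - b')\<bar>" "\<bar>b - b'\<bar> \<le> \<bar>(a - b) - (a' - b')\<bar>"
proof -
  have no_increase: False if "a1 < a2" "b1 < b2" "smax \<eta> l a1 b1 = smax \<eta> l a2 b2" for a1 a2 b1 b2
  proof -
    define s where "s = min (a2 - a1) (b2 - b1)"
    have "smax \<eta> l (a1 + s) (b1 + s) \<le> smax \<eta> l a2 b2"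
      using assms(1) that by (intro smax_mono) (auto simp: s_def)
    then show False using smax_add[of l a1 s b1] that by (simp add: s_def)
  qed
  have "\<not> (a < a' \<and> b < b')" "\<not> (a' < a \<and> b' < b)"
    using no_increase[of a a' b b'] no_increase[of a' a b' b] assms(2) by auto
  then show "\<bar>a - a'\<bar> \<le> \<bar>(a - b) - (a' - b')\<bar>" "\<bar>b - b'\<bar> \<le> \<bar>(a - b) - (a' - b')\<bar>" by auto
qed

lemma uhat_mono:
  assumes "0 < lam0" "0 < \<gamma>" "\<gamma> \<le> 1" "\<And>l. l \<le> m \<Longrightarrow> u l x \<le> v l y"
  shows "uhat \<eta> \<gamma> lam0 u m x \<le> uhat \<eta> \<gamma> lam0 v m y"
  using assms(4)
proof (induction m)
  case (Suc m)
  then show ?case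
    unfolding uhat_Suc_smax using lam_pos[OF assms(1-3)] by (intro smax_mono) auto
qed simp

lemma uhat_add:
  assumes "\<And>l. l \<le> m \<Longrightarrow> v l y = u l x + s"
  shows "uhat \<eta> \<gamma> lam0 v m y = uhat \<eta> \<gamma> lam0 u m x + s"
  using assms by (induction m) (simp_all add: uhat_Suc_smax smax_add[symmetric])

lemma uhat_ge:
  assumes "0 < lam0" "0 < \<gamma>" "\<gamma> \<le> 1" "l \<le> m"
  shows "u l x \<le> uhat \<eta> \<gamma> lam0 u m x"
  using assms(4)
proof (induction m)
  case (Suc m)
  have "u l x \<le> max (uhat \<eta> \<gamma> lam0 u m x) (u (Suc m) x)"
    using Suc by (cases "l = Suc m") auto
  also have "\<dots> \<le> uhat \<eta> \<gamma> lam0 u (Suc m) x"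
    unfolding uhat_Suc_smax by (rule max_le_smax[OF lam_pos[OF assms(1-3)]])
  finally show ?case .
qed simp

lemma uhat_le:
  assumes "0 < lam0" "0 < \<gamma>" "\<gamma> \<le> 1" "\<And>l. l \<le> m \<Longrightarrow> u l x \<le> b"
  shows "uhat \<eta> \<gamma> lam0 u m x \<le> b + m / (2 * lam0)"
  using assms(4)
proof (induction m)
  case (Suc m)
  have "0 \<le> m / (2 * lam0)" using assms(1) by simp
  then have "max (uhat \<eta> \<gamma> lam0 u m x) (u (Suc m) x) \<le> b + m / (2 * lam0)"
    using Suc.IH Suc.prems by fastforce
  moreover have "1 / (2 * lam \<gamma> lam0 (Suc m)) \<le> 1 / (2 * lam0)"
    using divide_lam_le[OF assms(1-3), of "1/2" "Suc m"] by simp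
  moreover have "b + Suc m / (2 * lam0) = (b + m / (2 * lam0)) + 1 / (2 * lam0)"
    by (simp add: add_divide_distrib)
  ultimately have "max (uhat \<eta> \<gamma> lam0 u m x) (u (Suc m) x) + 1 / (2 * lam \<gamma> lam0 (Suc m))
      \<le> b + Suc m / (2 * lam0)"
    by linarith
  then show ?case
    unfolding uhat_Suc_smax using smax_le_max[OF lam_pos[OF assms(1-3)]] by (rule order_trans[rotated])
qed simp

text \<open>The inactive values are invisible: each smoothed maximum involving one of them is exact,
  because its scale \<open>1/lam\<close> is at most \<open>1/lam0\<close>, which is small compared to the gap \<open>D\<close>.\<close>

lemma uhat_eq_on_active:
  assumes "0 < lam0" "0 < \<gamma>" "\<gamma> \<le> 1" "real (m + 1) \<le> 2 * D * lam0" "\<exists>l\<le>m. l \<in> P"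
    and active: "\<And>l. l \<le> m \<Longrightarrow> l \<in> P \<Longrightarrow> u l x = v l y \<and> \<alpha> \<le> u l x"
    and inactive: "\<And>l. l \<le> m \<Longrightarrow> l \<notin> P \<Longrightarrow> u l x \<le> \<alpha> - D \<and> v l y \<le> \<alpha> - D"
  shows "uhat \<eta> \<gamma> lam0 u m x = uhat \<eta> \<gamma> lam0 v m y"
  using assms(4-)
proof (induction m)
  case (Suc m)
  define lam_m where "lam_m = lam \<gamma> lam0 (Suc m)"
  have "0 < lam_m" using lam_pos[OF assms(1-3)] by (simp add: lam_m_def)
  have "1 / (2 * lam_m) \<le> 1 / (2 * lam0)"
    using divide_lam_le[OF assms(1-3), of "1/2" "Suc m"] by (simp add: lam_m_def)
  moreover have "1 / (2 * lam0) \<le> D - m / (2 * lam0)"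
    using Suc.prems(1) assms(1) by (simp add: field_simps)
  moreover have "0 \<le> m / (2 * lam0)" using assms(1) by simp
  ultimately have gap: "1 / (2 * lam_m) \<le> D - m / (2 * lam0)" "1 / (2 * lam_m) \<le> D" by linarith+
  let ?U = "uhat \<eta> \<gamma> lam0 u m x" and ?V = "uhat \<eta> \<gamma> lam0 v m y"
  let ?a = "u (Suc m) x" and ?b = "v (Suc m) y"
  show ?case
  proof (cases "\<exists>l\<le>m. l \<in> P")
    case True
    have UV: "?U = ?V"
    proof (rule Suc.IH[OF _ True])
      show "real (m + 1) \<le> 2 * D * lam0" using Suc.prems(1) by simp
      show "u l x = v l y \<and> \<alpha> \<le> u l x" if "l \<le> m" "l \<in> P" for l using Suc.prems(3)[of l] that le_SucI by blast
      show "u l x \<le> \<alpha> - D \<and> v l y \<le> \<alpha> - D" if "l \<le> m" "l \<notin> P" for l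
        using Suc.prems(4)[of l] that le_SucI by blast
    qed
    show ?thesis
    proof (cases "Suc m \<in> P")
      case True
      then show ?thesis using UV Suc.prems(3)[of "Suc m"] by (simp add: uhat_Suc_smax)
    next
      case False
      obtain l0 where "l0 \<le> m" "l0 \<in> P" using \<open>\<exists>l\<le>m. l \<in> P\<close> by blast
      then have "\<alpha> \<le> ?U" using Suc.prems(3)[of l0] uhat_ge[OF assms(1-3), of l0 m u x] by simp
      moreover have "?a \<le> \<alpha> - D" "?b \<le> \<alpha> - D" using Suc.prems(4)[of "Suc m"] False by auto
      ultimately have "1 / (2 * lam_m) \<le> ?U - ?a" "1 / (2 * lam_m) \<le> ?V - ?b" using gap UV by linarith+
      then have "smax \<eta> lam_m ?U ?a = ?U" "smax \<eta> lam_m ?V ?b = ?V"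
        using smax_eq_left[OF \<open>0 < lam_m\<close>] by simp_all
      then show ?thesis unfolding uhat_Suc_smax lam_m_def[symmetric] using UV by simp
    qed
  next
    case False
    then have active_Suc: "Suc m \<in> P" "?a = ?b" "\<alpha> \<le> ?a"
      using Suc.prems(2,3) le_Suc_eq by auto
    have "?U \<le> (\<alpha> - D) + m / (2 * lam0)" "?V \<le> (\<alpha> - D) + m / (2 * lam0)"
      using Suc.prems(4) False by (auto intro!: uhat_le[OF assms(1-3)])
    then have "1 / (2 * lam_m) \<le> ?a - ?U" "1 / (2 * lam_m) \<le> ?b - ?V" using gap active_Suc by linarith+
    then have "smax \<eta> lam_m ?U ?a = ?a" "smax \<eta> lam_m ?V ?b = ?b"
      using smax_eq_right[OF \<open>0 < lam_m\<close>] by simp_all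
    then show ?thesis unfolding uhat_Suc_smax lam_m_def[symmetric] using active_Suc by simp
  qed
qed auto

text \<open>Lower the active values at \<open>x\<close> to \<open>u l y + \<sigma>\<close>: then the inactive values play no role at
  either point (by \<open>uhat_eq_on_active\<close>), and shift invariance finishes the comparison.\<close>

lemma uhat_growth:
  fixes u :: "nat \<Rightarrow> 'a::real_inner \<Rightarrow> real"
  assumes "0 < lam0" "0 < \<gamma>" "\<gamma> \<le> 1" "real (m + 1) \<le> 2 * g * lam0"
    and diff: "\<And>l. l \<le> m \<Longrightarrow> u l x - u l y = N l \<bullet> (x - y)"
    and unit: "\<And>l. l \<le> m \<Longrightarrow> norm (N l) = 1"
    and dir: "\<And>l. l \<le> m \<Longrightarrow> l \<in> P \<Longrightarrow> c \<le> N l \<bullet> d"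
    and xy: "x - y = t *\<^sub>R d + w" and "0 \<le> t" and "0 \<le> c * t - norm w"
    and gx: "gap_split m P \<alpha> g (\<lambda>l. u l x)" and gy: "gap_split m P \<alpha> g (\<lambda>l. u l y)"
    and "\<exists>l\<le>m. l \<in> P"
  shows "uhat \<eta> \<gamma> lam0 u m y + (c * t - norm w) \<le> uhat \<eta> \<gamma> lam0 u m x"
proof -
  define \<sigma> where "\<sigma> = c * t - norm w"
  define u1 where "u1 l (z::'a) = (if l \<in> P then u l y + \<sigma> else u l x)" for l z
  define u2 where "u2 l (z::'a) = u l y + \<sigma>" for l z
  have "u1 l x \<le> u l x" if "l \<le> m" for l
  proof (cases "l \<in> P")
    case True
    have "t * c \<le> t * (N l \<bullet> d)" using dir that True \<open>0 \<le> t\<close> by (simp add: mult_left_mono)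
    moreover have "\<bar>N l \<bullet> w\<bar> \<le> norm w" using Cauchy_Schwarz_ineq2[of "N l" w] unit that by simp
    ultimately have "\<sigma> \<le> u l x - u l y"
      using diff[OF that] by (simp add: xy inner_add_right \<sigma>_def mult.commute)
    then show ?thesis using True by (simp add: u1_def)
  qed (simp add: u1_def)
  then have "uhat \<eta> \<gamma> lam0 u1 m x \<le> uhat \<eta> \<gamma> lam0 u m x"
    by (intro uhat_mono[OF assms(1-3)])
  moreover have "uhat \<eta> \<gamma> lam0 u1 m x = uhat \<eta> \<gamma> lam0 u2 m x"
    by (rule uhat_eq_on_active[OF assms(1-4), where \<alpha>="\<alpha> + \<sigma>"])
       (use gx gy \<open>0 \<le> c * t - norm w\<close> \<open>\<exists>l\<le>m. l \<in> P\<close> in \<open>auto simp: gap_split_def u1_def u2_def \<sigma>_def\<close>)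
  moreover have "uhat \<eta> \<gamma> lam0 u2 m x = uhat \<eta> \<gamma> lam0 u m y + \<sigma>"
    by (rule uhat_add) (simp add: u2_def)
  ultimately show ?thesis by (simp add: \<sigma>_def)
qed

lemma uhat_growth_abs:
  fixes u :: "nat \<Rightarrow> 'a::real_inner \<Rightarrow> real"
  assumes "0 < lam0" "0 < \<gamma>" "\<gamma> \<le> 1" "real (m + 1) \<le> 2 * g * lam0"
    and diff: "\<And>l x y. l \<le> m \<Longrightarrow> u l x - u l y = N l \<bullet> (x - y)"
    and unit: "\<And>l. l \<le> m \<Longrightarrow> norm (N l) = 1"
    and dir: "\<And>l. l \<le> m \<Longrightarrow> l \<in> P \<Longrightarrow> c \<le> N l \<bullet> d"
    and xy: "x - y = t *\<^sub>R d + w"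
    and gx: "gap_split m P \<alpha> g (\<lambda>l. u l x)" and gy: "gap_split m P \<alpha> g (\<lambda>l. u l y)"
    and "\<exists>l\<le>m. l \<in> P"
  shows "c * \<bar>t\<bar> \<le> \<bar>uhat \<eta> \<gamma> lam0 u m x - uhat \<eta> \<gamma> lam0 u m y\<bar> + norm w"
proof (cases "0 \<le> t")
  case True
  show ?thesis
  proof (cases "0 \<le> c * t - norm w")
    case True
    then show ?thesis
      using uhat_growth[OF assms(1-4) diff unit dir xy \<open>0 \<le> t\<close> True gx gy \<open>\<exists>l\<le>m. l \<in> P\<close>] \<open>0 \<le> t\<close> by simp
  qed (use True in simp)
next
  case False
  have yx: "y - x = (- t) *\<^sub>R d + (- w)" using xy by (simp add: algebra_simps)
  show ?thesis
  proof (cases "0 \<le> c * (- t) - norm (- w)")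
    case True
    then show ?thesis
      using uhat_growth[OF assms(1-4) _ unit dir yx _ True gy gx \<open>\<exists>l\<le>m. l \<in> P\<close>] diff False
      by (force simp: inner_diff_right)
  qed (use False in simp)
qed

end

section \<open>Covers and Hausdorff measure\<close>

definition fine_cover :: "real \<Rightarrow> real \<Rightarrow> 'a::metric_space set \<Rightarrow> real \<Rightarrow> bool" where
  "fine_cover s \<delta> A B \<longleftrightarrow> (\<exists>F. finite F \<and> A \<subseteq> \<Union>F \<and> (\<forall>c\<in>F. bounded c \<and> diameter c \<le> \<delta>)
     \<and> (\<Sum>c\<in>F. (diameter c / 2) powr s) \<le> B)"

lemma fine_cover_empty: "0 \<le> B \<Longrightarrow> fine_cover s \<delta> {} B"
  unfolding fine_cover_def by (intro exI[of _ "{}"]) simp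

lemma fine_cover_mono: "fine_cover s \<delta> A B \<Longrightarrow> A' \<subseteq> A \<Longrightarrow> fine_cover s \<delta> A' B"
  unfolding fine_cover_def by blast

lemma fine_cover_Un:
  assumes "fine_cover s \<delta> A B" "fine_cover s \<delta> A' B'"
  shows "fine_cover s \<delta> (A \<union> A') (B + B')"
proof -
  obtain F where F: "finite F" "A \<subseteq> \<Union>F" "\<forall>c\<in>F. bounded c \<and> diameter c \<le> \<delta>"
    "(\<Sum>c\<in>F. (diameter c / 2) powr s) \<le> B"
    using assms(1) unfolding fine_cover_def by blast
  obtain F' where F': "finite F'" "A' \<subseteq> \<Union>F'" "\<forall>c\<in>F'. bounded c \<and> diameter c \<le> \<delta>"
    "(\<Sum>c\<in>F'. (diameter c / 2) powr s) \<le> B'"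
    using assms(2) unfolding fine_cover_def by blast
  have "(\<Sum>c\<in>F \<union> F'. (diameter c / 2) powr s)
      \<le> (\<Sum>c\<in>F. (diameter c / 2) powr s) + (\<Sum>c\<in>F'. (diameter c / 2) powr s)"
    using sum_Un[OF F(1) F'(1), of "\<lambda>c. (diameter c / 2) powr s"]
      sum_nonneg[of "F \<inter> F'" "\<lambda>c. (diameter c / 2) powr s"] by simp
  moreover have "A \<union> A' \<subseteq> \<Union>(F \<union> F')" using F(2) F'(2) by blast
  ultimately show ?thesis
    unfolding fine_cover_def using F F' by (intro exI[of _ "F \<union> F'"]) auto
qed

lemma fine_cover_UN:
  assumes "finite J" "\<And>j. j \<in> J \<Longrightarrow> fine_cover s \<delta> (A j) (B j)"
  shows "fine_cover s \<delta> (\<Union>j\<in>J. A j) (\<Sum>j\<in>J. B j)"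
  using assms
proof (induction J rule: finite_induct)
  case (insert j J)
  then show ?case using fine_cover_Un[of s \<delta> "A j" "B j"] by simp
qed (simp add: fine_cover_empty)

lemma hausdorff_const_nonneg:
  assumes "0 \<le> s"
  shows "0 \<le> hausdorff_const s"
proof -
  have "0 < Gamma (s / 2 + 1)" using assms by (intro Gamma_real_pos) simp
  then show ?thesis unfolding hausdorff_const_def by simp
qed

lemma hausdorff_pre_le_finite_cover:
  fixes A :: "'a::metric_space set"
  assumes "0 \<le> s" "finite F" "A \<subseteq> \<Union>F" "\<forall>c\<in>F. bounded c \<and> diameter c \<le> \<delta>" "0 < \<delta>"
  shows "hausdorff_pre s \<delta> A \<le> ennreal (\<Sum>c\<in>F. hausdorff_const s * (diameter c / 2) powr s)"
proof -
  obtain h where h: "bij_betw h {0..<card F} F"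
    using ex_bij_betw_nat_finite[OF assms(2)] by blast
  define C where "C i = (if i < card F then h i else {})" for i
  have "C \<in> {C. A \<subseteq> (\<Union>i. C i) \<and> (\<forall>i. bounded (C i) \<and> diameter (C i) \<le> \<delta>)}"
  proof (safe)
    fix x assume "x \<in> A"
    then obtain c where "c \<in> F" "x \<in> c" using assms(3) by auto
    then have "c \<in> h ` {0..<card F}" using h by (simp add: bij_betw_def)
    then obtain i where "i < card F" "h i = c" by auto
    then show "x \<in> (\<Union>i. C i)" using \<open>x \<in> c\<close> by (auto simp: C_def)
  qed (use assms(4,5) h in \<open>auto simp: C_def bij_betw_def\<close>)
  then have "hausdorff_pre s \<delta> A \<le> (\<Sum>i. ennreal (hausdorff_const s * (diameter (C i) / 2) powr s))"
    unfolding hausdorff_pre_def by (rule INF_lower)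
  also have "\<dots> = (\<Sum>i\<in>{0..<card F}. ennreal (hausdorff_const s * (diameter (h i) / 2) powr s))"
    by (subst suminf_finite[of "{0..<card F}"]) (auto simp: C_def)
  also have "\<dots> = (\<Sum>c\<in>F. ennreal (hausdorff_const s * (diameter c / 2) powr s))"
    using sum.reindex_bij_betw[OF h] by simp
  also have "\<dots> = ennreal (\<Sum>c\<in>F. hausdorff_const s * (diameter c / 2) powr s)"
    using hausdorff_const_nonneg[OF assms(1)] by (intro sum_ennreal) auto
  finally show ?thesis .
qed

lemma hausdorff_measure_le:
  fixes A :: "'a::metric_space set"
  assumes "0 \<le> s" "\<And>\<delta>. 0 < \<delta> \<Longrightarrow> fine_cover s \<delta> A B"
  shows "hausdorff_measure s A \<le> ennreal (hausdorff_const s * B)"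
  unfolding hausdorff_measure_def
proof (rule SUP_least)
  fix \<delta> :: real assume "\<delta> \<in> {0<..}"
  then have "0 < \<delta>" by simp
  then obtain F where F: "finite F" "A \<subseteq> \<Union>F" "\<forall>c\<in>F. bounded c \<and> diameter c \<le> \<delta>"
    "(\<Sum>c\<in>F. (diameter c / 2) powr s) \<le> B"
    using assms(2) unfolding fine_cover_def by blast
  have "hausdorff_pre s \<delta> A \<le> ennreal (\<Sum>c\<in>F. hausdorff_const s * (diameter c / 2) powr s)"
    using hausdorff_pre_le_finite_cover[OF assms(1) F(1-3) \<open>0 < \<delta>\<close>] .
  also have "\<dots> \<le> ennreal (hausdorff_const s * B)"
    using F(4) hausdorff_const_nonneg[OF assms(1)]
    by (intro ennreal_leI) (simp add: sum_distrib_left[symmetric] mult_left_mono)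
  finally show "hausdorff_pre s \<delta> A \<le> ennreal (hausdorff_const s * B)" .
qed

lemma grid_index_exists:
  fixes lo hi t h :: real
  assumes "lo \<le> t" "t \<le> hi" "0 < h"
  obtains n where "n \<le> nat \<lfloor>(hi - lo) / h\<rfloor>" "lo + n * h \<le> t" "t \<le> lo + (real n + 1) * h"
proof -
  define \<tau> where "\<tau> = (t - lo) / h"
  have \<tau>: "0 \<le> \<tau>" "\<tau> \<le> (hi - lo) / h"
    using assms by (simp_all add: \<tau>_def divide_right_mono)
  have "real (nat \<lfloor>\<tau>\<rfloor>) \<le> \<tau>" "\<tau> \<le> real (nat \<lfloor>\<tau>\<rfloor>) + 1" using \<tau>(1) by linarith+
  then have "real (nat \<lfloor>\<tau>\<rfloor>) * h \<le> \<tau> * h" "\<tau> * h \<le> (real (nat \<lfloor>\<tau>\<rfloor>) + 1) * h"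
    using assms(3) by (simp_all add: mult_right_mono)
  moreover have "t = lo + \<tau> * h" using assms(3) by (simp add: \<tau>_def)
  ultimately have "lo + nat \<lfloor>\<tau>\<rfloor> * h \<le> t" "t \<le> lo + (real (nat \<lfloor>\<tau>\<rfloor>) + 1) * h" by linarith+
  moreover have "nat \<lfloor>\<tau>\<rfloor> \<le> nat \<lfloor>(hi - lo) / h\<rfloor>" using \<tau>(2) by (intro nat_mono floor_mono)
  ultimately show thesis using that by blast
qed

lemma diameter_le_metric:
  fixes S :: "'a::metric_space set"
  assumes "0 \<le> d" "\<And>x y. x \<in> S \<Longrightarrow> y \<in> S \<Longrightarrow> dist x y \<le> d"
  shows "diameter S \<le> d"
  using assms by (auto simp: diameter_def intro: cSUP_least)

definition grid_cell :: "'i set \<Rightarrow> ('i \<Rightarrow> 'a \<Rightarrow> real) \<Rightarrow> ('i \<Rightarrow> real) \<Rightarrow> real \<Rightarrow> 'a set \<Rightarrow> ('i \<Rightarrow> nat) \<Rightarrow> 'a set"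
  where "grid_cell E f lo h T g =
    {x \<in> T. \<forall>e\<in>E. lo e + g e * h \<le> f e x \<and> f e x \<le> lo e + (real (g e) + 1) * h}"

lemma grid_cell_coordinate_close:
  assumes "x \<in> grid_cell E f lo h T g" "y \<in> grid_cell E f lo h T g" "e \<in> E"
  shows "\<bar>f e x - f e y\<bar> \<le> h"
proof -
  have "lo e + g e * h \<le> f e x \<and> f e x \<le> lo e + g e * h + h"
    "lo e + g e * h \<le> f e y \<and> f e y \<le> lo e + g e * h + h"
    using assms unfolding grid_cell_def by (auto simp: distrib_right)
  then show ?thesis by (simp add: abs_le_iff)
qed

lemma grid_cells_cover:
  assumes "0 < h" and range: "\<And>x e. x \<in> T \<Longrightarrow> e \<in> E \<Longrightarrow> lo e \<le> f e x \<and> f e x \<le> hi e"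
  shows "T \<subseteq> (\<Union>g\<in>PiE E (\<lambda>e. {..nat \<lfloor>(hi e - lo e) / h\<rfloor>}). grid_cell E f lo h T g)"
proof
  fix x assume "x \<in> T"
  have "\<forall>e\<in>E. \<exists>n. n \<le> nat \<lfloor>(hi e - lo e) / h\<rfloor> \<and> lo e + n * h \<le> f e x \<and> f e x \<le> lo e + (real n + 1) * h"
  proof
    fix e assume "e \<in> E"
    show "\<exists>n. n \<le> nat \<lfloor>(hi e - lo e) / h\<rfloor> \<and> lo e + n * h \<le> f e x \<and> f e x \<le> lo e + (real n + 1) * h"
      using grid_index_exists[of "lo e" "f e x" "hi e" h] range[OF \<open>x \<in> T\<close> \<open>e \<in> E\<close>] assms(1) by blast
  qed
  from bchoice[OF this] obtain g where "\<forall>e\<in>E. g e \<le> nat \<lfloor>(hi e - lo e) / h\<rfloor>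
    \<and> lo e + g e * h \<le> f e x \<and> f e x \<le> lo e + (real (g e) + 1) * h"
    by blast
  then have "restrict g E \<in> PiE E (\<lambda>e. {..nat \<lfloor>(hi e - lo e) / h\<rfloor>})"
    "x \<in> grid_cell E f lo h T (restrict g E)"
    using \<open>x \<in> T\<close> by (auto simp: grid_cell_def)
  then show "x \<in> (\<Union>g\<in>PiE E (\<lambda>e. {..nat \<lfloor>(hi e - lo e) / h\<rfloor>}). grid_cell E f lo h T g)" by blast
qed

lemma card_grid_le:
  assumes "finite E" "0 < h" "\<And>e. e \<in> E \<Longrightarrow> h \<le> hi e - lo e"
  shows "real (card (PiE E (\<lambda>e. {..nat \<lfloor>(hi e - lo e) / h\<rfloor>}))) \<le> (\<Prod>e\<in>E. 2 * ((hi e - lo e) / h))"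
proof -
  have "real (card {..nat \<lfloor>(hi e - lo e) / h\<rfloor>}) \<le> 2 * ((hi e - lo e) / h)" if "e \<in> E" for e
  proof -
    have "1 \<le> (hi e - lo e) / h" using assms(2) assms(3)[OF that] by simp
    moreover from this have "real (nat \<lfloor>(hi e - lo e) / h\<rfloor>) \<le> (hi e - lo e) / h" by linarith
    ultimately show ?thesis by (simp only: card_atMost of_nat_Suc)
  qed
  then show ?thesis unfolding card_PiE[OF assms(1)] of_nat_prod by (intro prod_mono) auto
qed

text \<open>The cover consists of the preimages of the cells of a fine grid in the coordinates \<open>f e\<close>;
  the Lipschitz hypothesis turns the mesh of the grid into a bound on the diameters.\<close>

lemma coordinate_grid_cover:
  fixes T :: "'a::metric_space set" and f :: "'i \<Rightarrow> 'a \<Rightarrow> real"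
  assumes E: "finite E" "E \<noteq> {}" and "0 < L" "0 < \<delta>"
    and lo_hi: "\<And>e. e \<in> E \<Longrightarrow> lo e < hi e"
    and range: "\<And>x e. x \<in> T \<Longrightarrow> e \<in> E \<Longrightarrow> lo e \<le> f e x \<and> f e x \<le> hi e"
    and lip: "\<And>x y. x \<in> T \<Longrightarrow> y \<in> T \<Longrightarrow> dist x y \<le> L * (\<Sum>e\<in>E. \<bar>f e x - f e y\<bar>)"
  shows "fine_cover (card E) \<delta> T ((L * card E) ^ card E * (\<Prod>e\<in>E. hi e - lo e))"
proof -
  define m where "m = card E"
  have "1 \<le> m" using E by (simp add: m_def Suc_le_eq card_gt_0_iff)
  define h where "h = min (\<delta> / (L * m)) (Min ((\<lambda>e. hi e - lo e) ` E))"
  have h: "0 < h" "L * m * h \<le> \<delta>"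
  proof -
    show "0 < h" using E lo_hi \<open>0 < L\<close> \<open>0 < \<delta>\<close> \<open>1 \<le> m\<close> by (auto simp: h_def)
    have "h \<le> \<delta> / (L * m)" by (simp add: h_def)
    then show "L * m * h \<le> \<delta>" using \<open>0 < L\<close> \<open>1 \<le> m\<close> by (simp add: field_simps)
  qed
  have h_le: "h \<le> hi e - lo e" if "e \<in> E" for e
    using that E unfolding h_def by (meson Min_le finite_imageI image_eqI min.coboundedI2 order_trans)
  define G where "G = PiE E (\<lambda>e. {..nat \<lfloor>(hi e - lo e) / h\<rfloor>})"
  let ?cell = "grid_cell E f lo h T"
  have cell_small: "bounded (?cell g) \<and> diameter (?cell g) \<le> L * m * h" for g
  proof -
    have dist: "dist x y \<le> L * m * h" if "x \<in> ?cell g" "y \<in> ?cell g" for x y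
    proof -
      have "(\<Sum>e\<in>E. \<bar>f e x - f e y\<bar>) \<le> m * h"
        using sum_bounded_above[of E "\<lambda>e. \<bar>f e x - f e y\<bar>" h] grid_cell_coordinate_close[OF that]
        by (simp add: m_def)
      then have "L * (\<Sum>e\<in>E. \<bar>f e x - f e y\<bar>) \<le> L * (m * h)" using \<open>0 < L\<close> by (intro mult_left_mono) auto
      moreover have "dist x y \<le> L * (\<Sum>e\<in>E. \<bar>f e x - f e y\<bar>)" using lip that by (simp add: grid_cell_def)
      ultimately show ?thesis by (simp add: mult.assoc)
    qed
    have "0 \<le> L * m * h" using \<open>0 < L\<close> h(1) by simp
    then have "diameter (?cell g) \<le> L * m * h" using dist by (rule diameter_le_metric)
    moreover have "bounded (?cell g)" unfolding bounded_two_points using dist by blast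
    ultimately show ?thesis by blast
  qed
  have "(\<Sum>c\<in>?cell ` G. (diameter c / 2) powr m) \<le> (\<Sum>g\<in>G. (L * m * h / 2) ^ m)"
  proof -
    have "(\<Sum>c\<in>?cell ` G. (diameter c / 2) powr m) \<le> (\<Sum>g\<in>G. (diameter (?cell g) / 2) powr m)"
      using sum_image_le[of G "\<lambda>c. (diameter c / 2) powr m" ?cell] E by (simp add: G_def finite_PiE o_def)
    also have "\<dots> \<le> (\<Sum>g\<in>G. (L * m * h / 2) powr m)"
      using cell_small diameter_ge_0 by (intro sum_mono powr_mono2) auto
    finally show ?thesis using \<open>0 < L\<close> h \<open>1 \<le> m\<close> by (simp add: powr_realpow)
  qed
  also have "\<dots> = real (card G) * (\<Prod>e\<in>E. L * m * h / 2)" by (simp add: m_def)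
  also have "\<dots> \<le> (\<Prod>e\<in>E. 2 * ((hi e - lo e) / h)) * (\<Prod>e\<in>E. L * m * h / 2)"
    using card_grid_le[OF E(1) h(1) h_le] \<open>0 < L\<close> h(1) by (intro mult_right_mono) (auto simp: G_def)
  also have "\<dots> = (\<Prod>e\<in>E. 2 * ((hi e - lo e) / h) * (L * m * h / 2))" by (rule prod.distrib[symmetric])
  also have "\<dots> = (\<Prod>e\<in>E. (L * m) * (hi e - lo e))"
    using h(1) by (intro prod.cong) (auto simp: field_simps)
  also have "\<dots> = (L * m) ^ m * (\<Prod>e\<in>E. hi e - lo e)" by (simp add: prod.distrib m_def)
  finally have "(\<Sum>c\<in>?cell ` G. (diameter c / 2) powr m) \<le> (L * m) ^ m * (\<Prod>e\<in>E. hi e - lo e)" .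
  moreover have "\<forall>c\<in>?cell ` G. bounded c \<and> diameter c \<le> \<delta>"
  proof
    fix c assume "c \<in> ?cell ` G"
    then obtain g where "c = ?cell g" by blast
    then show "bounded c \<and> diameter c \<le> \<delta>" using cell_small[of g] h(2) by auto
  qed
  moreover have "finite (?cell ` G)" using E by (simp add: G_def finite_PiE)
  moreover have "T \<subseteq> \<Union>(?cell ` G)" using grid_cells_cover[OF h(1) range] by (simp add: G_def)
  ultimately show ?thesis
    unfolding fine_cover_def m_def[symmetric] by (intro exI[of _ "?cell ` G"]) blast
qed

section \<open>Linear algebra and compactness\<close>

lemma orthonormal_basis_extension:
  fixes S :: "'a::euclidean_space set"
  assumes orth_S: "pairwise orthogonal S" and unit_S: "\<And>e. e \<in> S \<Longrightarrow> norm e = 1"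
  obtains U where "S \<subseteq> U" "pairwise orthogonal U" "\<And>e. e \<in> U \<Longrightarrow> norm e = 1" "finite U"
    "card U = DIM('a)" "\<And>w. (norm w)\<^sup>2 = (\<Sum>e\<in>U. (w \<bullet> e)\<^sup>2)"
proof -
  have "finite S"
    using pairwise_orthogonal_independent[OF orth_S] unit_S finiteI_independent by force
  define V where "V = {y. \<forall>x\<in>S. orthogonal x y}"
  have "subspace V" unfolding V_def by (rule subspace_orthogonal_to_vectors)
  then obtain B where B: "B \<subseteq> V" "pairwise orthogonal B" "\<And>e. e \<in> B \<Longrightarrow> norm e = 1" "span B = V"
    using orthonormal_basis_subspace by metis
  define U where "U = S \<union> B"
  have "orthogonal x y" "orthogonal y x" if "x \<in> S" "y \<in> B" for x y
    using B(1) that by (auto simp: V_def orthogonal_commute)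
  then have orth_U: "pairwise orthogonal U"
    using orth_S B(2) unfolding U_def pairwise_def by blast
  have unit_U: "\<And>e. e \<in> U \<Longrightarrow> norm e = 1" using unit_S B(3) by (auto simp: U_def)
  then have indep: "independent U"
    using pairwise_orthogonal_independent[OF orth_U] by force
  then have "finite U" by (rule finiteI_independent)
  have "w \<in> span U" for w
  proof -
    define v where "v = w - (\<Sum>e\<in>S. (w \<bullet> e) *\<^sub>R e)"
    have "x \<bullet> (\<Sum>e\<in>S. (w \<bullet> e) *\<^sub>R e) = x \<bullet> w" if "x \<in> S" for x
    proof -
      have "x \<bullet> (\<Sum>e\<in>S. (w \<bullet> e) *\<^sub>R e) = (\<Sum>e\<in>S. (w \<bullet> e) * (x \<bullet> e))" by (simp add: inner_sum_right)
      also have "\<dots> = (\<Sum>e\<in>S. if e = x then w \<bullet> x else 0)"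
        using orth_S unit_S that by (intro sum.cong) (auto simp: pairwise_def orthogonal_def dot_square_norm)
      finally show ?thesis using that \<open>finite S\<close> by (simp add: inner_commute)
    qed
    then have "v \<in> V" by (auto simp: V_def v_def orthogonal_def inner_diff_right)
    then have "v \<in> span U" using B(4) span_mono[of B U] by (auto simp: U_def)
    moreover have "(\<Sum>e\<in>S. (w \<bullet> e) *\<^sub>R e) \<in> span U"
      by (intro span_sum span_scale span_base) (simp add: U_def)
    ultimately show ?thesis using span_add by (fastforce simp: v_def)
  qed
  then have "span U = UNIV" by auto
  then have "card U = DIM('a)" using dim_span_eq_card_independent[OF indep] by simp
  moreover have "(norm w)\<^sup>2 = (\<Sum>e\<in>U. (w \<bullet> e)\<^sup>2)" for w
  proof -
    have "w = (\<Sum>e\<in>U. (w \<bullet> e) *\<^sub>R e)"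
      using orthonormal_basis_expand[OF orth_U unit_U _ \<open>finite U\<close>] \<open>span U = UNIV\<close> by simp
    then have "w \<bullet> w = w \<bullet> (\<Sum>e\<in>U. (w \<bullet> e) *\<^sub>R e)" by simp
    then show ?thesis by (simp add: dot_square_norm inner_sum_right power2_eq_square)
  qed
  ultimately show ?thesis using that[OF _ orth_U unit_U \<open>finite U\<close>] by (auto simp: U_def)
qed

lemma orthonormal_triple_completion:
  fixes d n b :: "'a::euclidean_space"
  assumes unit: "norm d = 1" "norm n = 1" "norm b = 1" and orth: "d \<bullet> n = 0" "d \<bullet> b = 0" "n \<bullet> b = 0"
  obtains B where "finite B" "n \<notin> B" "b \<notin> B" "card B + 3 = DIM('a)" "\<And>e. e \<in> B \<Longrightarrow> norm e = 1"
    "\<And>v. (norm v)\<^sup>2 = (v \<bullet> d)\<^sup>2 + (v \<bullet> n)\<^sup>2 + (v \<bullet> b)\<^sup>2 + (\<Sum>e\<in>B. (v \<bullet> e)\<^sup>2)"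
proof -
  have orth3: "pairwise orthogonal {d, n, b}"
    using orth by (auto simp: pairwise_def orthogonal_def inner_commute)
  have unit3: "\<And>e. e \<in> {d, n, b} \<Longrightarrow> norm e = 1" using unit by auto
  obtain U where U: "{d, n, b} \<subseteq> U" "pairwise orthogonal U" "\<And>e. e \<in> U \<Longrightarrow> norm e = 1"
    "finite U" "card U = DIM('a)" "\<And>v. (norm v)\<^sup>2 = (\<Sum>e\<in>U. (v \<bullet> e)\<^sup>2)"
    using orthonormal_basis_extension[OF orth3 unit3] by blast
  have distinct: "d \<noteq> n" "d \<noteq> b" "n \<noteq> b" using unit orth by (auto simp: dot_square_norm[symmetric])
  define B where "B = U - {d, n, b}"
  have B: "finite B" "d \<notin> B" "n \<notin> B" "b \<notin> B" using U(4) by (auto simp: B_def)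
  have U_eq: "U = insert d (insert n (insert b B))" using U(1) by (auto simp: B_def)
  show thesis
  proof (rule that[OF B(1,3,4)])
    show "card B + 3 = DIM('a)" using U(5) B distinct by (simp add: U_eq)
    show "norm e = 1" if "e \<in> B" for e using U(3) that by (simp add: B_def)
    show "(norm v)\<^sup>2 = (v \<bullet> d)\<^sup>2 + (v \<bullet> n)\<^sup>2 + (v \<bullet> b)\<^sup>2 + (\<Sum>e\<in>B. (v \<bullet> e)\<^sup>2)" for v
      using U(6)[of v] B distinct by (simp add: U_eq add.assoc)
  qed
qed

text \<open>The vector is a normalised combination \<open>x a + y b + z n\<close> orthogonal to \<open>d\<close> and \<open>n\<close>
  with \<open>(x, y) \<noteq> (0, 0)\<close>, which is nonzero by independence.\<close>

lemma unit_vector_orthogonal_bound: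
  fixes a b n d :: "'a::real_inner"
  assumes indep: "\<And>x y z. x *\<^sub>R a + y *\<^sub>R b + z *\<^sub>R n = 0 \<Longrightarrow> x = 0 \<and> y = 0 \<and> z = 0"
    and "norm n = 1" "n \<bullet> d = 0"
  obtains l W where "norm l = 1" "l \<bullet> d = 0" "l \<bullet> n = 0" "0 < W"
    "\<And>v. \<bar>l \<bullet> v\<bar> \<le> W * (\<bar>a \<bullet> v\<bar> + \<bar>b \<bullet> v\<bar> + \<bar>n \<bullet> v\<bar>)"
proof -
  have nn: "n \<bullet> n = 1" using \<open>norm n = 1\<close> by (simp add: dot_square_norm)
  obtain x y z where xyz: "x \<noteq> 0 \<or> y \<noteq> 0" "(x *\<^sub>R a + y *\<^sub>R b + z *\<^sub>R n) \<bullet> d = 0"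
    "(x *\<^sub>R a + y *\<^sub>R b + z *\<^sub>R n) \<bullet> n = 0"
  proof (cases "a \<bullet> d = 0 \<and> b \<bullet> d = 0")
    case True
    then show ?thesis
      using that[of 1 0 "- (a \<bullet> n)"] \<open>n \<bullet> d = 0\<close> nn by (simp add: inner_diff_left)
  next
    case False
    define z where "z = (a \<bullet> d) * (b \<bullet> n) - (b \<bullet> d) * (a \<bullet> n)"
    have eqs: "((b \<bullet> d) *\<^sub>R a + (- (a \<bullet> d)) *\<^sub>R b + z *\<^sub>R n) \<bullet> d = (b \<bullet> d) * (a \<bullet> d) - (a \<bullet> d) * (b \<bullet> d) + z * (n \<bullet> d)"
      "((b \<bullet> d) *\<^sub>R a + (- (a \<bullet> d)) *\<^sub>R b + z *\<^sub>R n) \<bullet> n = (b \<bullet> d) * (a \<bullet> n) - (a \<bullet> d) * (b \<bullet> n) + z * (n \<bullet> n)"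
      by (simp_all add: inner_add_left inner_diff_left)
    show ?thesis
    proof (rule that[of "b \<bullet> d" "- (a \<bullet> d)" z])
      show "b \<bullet> d \<noteq> 0 \<or> - (a \<bullet> d) \<noteq> 0" using False by auto
    qed (use eqs \<open>n \<bullet> d = 0\<close> nn in \<open>simp_all add: z_def\<close>)
  qed
  define l0 where "l0 = x *\<^sub>R a + y *\<^sub>R b + z *\<^sub>R n"
  have "l0 \<noteq> 0" using indep xyz(1) by (auto simp: l0_def)
  then have pos: "0 < norm l0" by simp
  show ?thesis
  proof (rule that[of "l0 /\<^sub>R norm l0" "(\<bar>x\<bar> + \<bar>y\<bar> + \<bar>z\<bar>) / norm l0"])
    show "norm (l0 /\<^sub>R norm l0) = 1" "(l0 /\<^sub>R norm l0) \<bullet> d = 0" "(l0 /\<^sub>R norm l0) \<bullet> n = 0"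
      using pos xyz(2,3) by (simp_all add: l0_def)
    have "0 < \<bar>x\<bar> + \<bar>y\<bar> + \<bar>z\<bar>" using xyz(1) by linarith
    then show "0 < (\<bar>x\<bar> + \<bar>y\<bar> + \<bar>z\<bar>) / norm l0" using pos by simp
    fix v
    have "\<bar>l0 \<bullet> v\<bar> = \<bar>x * (a \<bullet> v) + y * (b \<bullet> v) + z * (n \<bullet> v)\<bar>"
      by (simp add: l0_def inner_add_left)
    also have "\<dots> \<le> \<bar>x * (a \<bullet> v)\<bar> + \<bar>y * (b \<bullet> v)\<bar> + \<bar>z * (n \<bullet> v)\<bar>" by linarith
    also have "\<dots> = \<bar>x\<bar> * \<bar>a \<bullet> v\<bar> + \<bar>y\<bar> * \<bar>b \<bullet> v\<bar> + \<bar>z\<bar> * \<bar>n \<bullet> v\<bar>" by (simp add: abs_mult)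
    also have "\<dots> \<le> (\<bar>x\<bar> + \<bar>y\<bar> + \<bar>z\<bar>) * (\<bar>a \<bullet> v\<bar> + \<bar>b \<bullet> v\<bar> + \<bar>n \<bullet> v\<bar>)"
      by (simp add: distrib_left distrib_right add_increasing)
    finally show "\<bar>(l0 /\<^sub>R norm l0) \<bullet> v\<bar> \<le> (\<bar>x\<bar> + \<bar>y\<bar> + \<bar>z\<bar>) / norm l0 * (\<bar>a \<bullet> v\<bar> + \<bar>b \<bullet> v\<bar> + \<bar>n \<bullet> v\<bar>)"
      using pos by (simp add: field_simps)
  qed
qed

lemma compact_uniformly_negative:
  fixes f :: "'i \<Rightarrow> 'a::metric_space \<Rightarrow> real"
  assumes "compact K" "finite M"
    and cont: "\<And>m. m \<in> M \<Longrightarrow> continuous_on K (f m)" and neg: "\<And>m x. m \<in> M \<Longrightarrow> x \<in> K \<Longrightarrow> f m x < 0"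
  obtains \<tau> where "0 < \<tau>" "\<And>m x. m \<in> M \<Longrightarrow> x \<in> K \<Longrightarrow> f m x \<le> - \<tau>"
proof -
  have "\<forall>m\<in>M. \<exists>\<tau>>0. \<forall>x\<in>K. f m x \<le> - \<tau>"
  proof
    fix m assume "m \<in> M"
    show "\<exists>\<tau>>0. \<forall>x\<in>K. f m x \<le> - \<tau>"
    proof (cases "K = {}")
      case False
      obtain z where "z \<in> K" "\<forall>x\<in>K. f m x \<le> f m z"
        using continuous_attains_sup[OF assms(1) False cont[OF \<open>m \<in> M\<close>]] by blast
      then show ?thesis using neg[OF \<open>m \<in> M\<close>] by (intro exI[of _ "- f m z"]) auto
    qed (intro exI[of _ 1]; simp)
  qed
  from bchoice[OF this] obtain \<tau> where \<tau>: "\<forall>m\<in>M. 0 < \<tau> m \<and> (\<forall>x\<in>K. f m x \<le> - \<tau> m)" by blast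
  show ?thesis
  proof (rule that[of "Min (insert 1 (\<tau> ` M))"])
    show "0 < Min (insert 1 (\<tau> ` M))" using \<tau> assms(2) by simp
    show "f m x \<le> - Min (insert 1 (\<tau> ` M))" if "m \<in> M" "x \<in> K" for m x
    proof -
      have "Min (insert 1 (\<tau> ` M)) \<le> \<tau> m" using that assms(2) by (intro Min_le) auto
      then show ?thesis using \<tau> that by fastforce
    qed
  qed
qed

lemma gap_level_exists:
  fixes v :: "nat \<Rightarrow> real" and q :: nat
  assumes "0 < g"
  obtains s where "s \<le> q + 1"
    "\<And>m. m \<le> q \<Longrightarrow> \<not> (- (2 * real s + 2) * g \<le> v m \<and> v m < - (2 * real s + 1) * g)"
proof -
  define window where "window m = nat \<lfloor>(- v m / g - 1) / 2\<rfloor>" for m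
  have window_eq: "window m = s"
    if "- (2 * real s + 2) * g \<le> v m" "v m < - (2 * real s + 1) * g" for m s
  proof -
    have "2 * real s + 1 < - v m / g" "- v m / g \<le> 2 * real s + 2"
      using that assms by (simp_all add: field_simps)
    then have "\<lfloor>(- v m / g - 1) / 2\<rfloor> = int s" by (subst floor_eq_iff) auto
    then show ?thesis by (simp add: window_def)
  qed
  show thesis
  proof (rule ccontr)
    assume "\<not> thesis"
    then have hit: "\<forall>s\<le>q+1. \<exists>m\<le>q. - (2 * real s + 2) * g \<le> v m \<and> v m < - (2 * real s + 1) * g"
      using that by blast
    have "{0..q+1} \<subseteq> window ` {0..q}"
    proof
      fix s assume "s \<in> {0..q+1}"
      then obtain m where "m \<le> q" "- (2 * real s + 2) * g \<le> v m" "v m < - (2 * real s + 1) * g"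
        using hit by auto
      then show "s \<in> window ` {0..q}" using window_eq by force
    qed
    then have "card {0..q+1} \<le> card (window ` {0..q})" by (intro card_mono) auto
    also have "\<dots> \<le> card {0..q}" by (rule card_image_le) simp
    finally show False by simp
  qed
qed

section \<open>Covering a piece of the level set\<close>

context soft_abs
begin

text \<open>On the zero set of \<^term>\<open>uhat \<eta> \<gamma> lam0 u (Suc m)\<close>, the difference
  \<open>uhat \<eta> \<gamma> lam0 u m - u (Suc m)\<close>, together with the coordinates orthogonal to \<open>d\<close> and
  \<open>N (Suc m)\<close>, controls the position: along \<open>N (Suc m)\<close> by the level-set property of
  \<open>smax\<close>, along \<open>d\<close> by the growth of \<^term>\<open>uhat \<eta> \<gamma> lam0 u m\<close> in direction \<open>d\<close>.\<close>

lemma level_set_inverse_lipschitz: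
  fixes u :: "nat \<Rightarrow> 'a::real_inner \<Rightarrow> real"
  assumes "0 < lam0" "0 < \<gamma>" "\<gamma> \<le> 1" "real (m + 1) \<le> 2 * g * lam0"
    and diff: "\<And>l x y. l \<le> Suc m \<Longrightarrow> u l x - u l y = N l \<bullet> (x - y)"
    and unit: "\<And>l. l \<le> Suc m \<Longrightarrow> norm (N l) = 1"
    and d: "norm d = 1" "N (Suc m) \<bullet> d = 0" and "0 < c"
    and dir: "\<And>l. l \<le> m \<Longrightarrow> l \<in> P \<Longrightarrow> c \<le> N l \<bullet> d"
    and level: "uhat \<eta> \<gamma> lam0 u (Suc m) x = 0" "uhat \<eta> \<gamma> lam0 u (Suc m) y = 0"
    and gx: "gap_split m P \<alpha> g (\<lambda>l. u l x)" and gy: "gap_split m P \<alpha> g (\<lambda>l. u l y)"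
    and "\<exists>l\<le>m. l \<in> P"
  shows "norm (x - y) \<le> (2 / c + 1) * sqrt
    (((uhat \<eta> \<gamma> lam0 u m x - u (Suc m) x) - (uhat \<eta> \<gamma> lam0 u m y - u (Suc m) y))\<^sup>2
      + ((norm (x - y))\<^sup>2 - ((x - y) \<bullet> d)\<^sup>2 - ((x - y) \<bullet> N (Suc m))\<^sup>2))"
proof -
  let ?n = "N (Suc m)"
  define v where "v = x - y"
  define t where "t = v \<bullet> d"
  define w where "w = v - t *\<^sub>R d"
  define a where "a = uhat \<eta> \<gamma> lam0 u m x"
  define a' where "a' = uhat \<eta> \<gamma> lam0 u m y"
  define D where "D = (a - u (Suc m) x) - (a' - u (Suc m) y)"
  define R where "R = (norm v)\<^sup>2 - t\<^sup>2 - (v \<bullet> ?n)\<^sup>2"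
  have "smax \<eta> (lam \<gamma> lam0 (Suc m)) a (u (Suc m) x) = 0"
    "smax \<eta> (lam \<gamma> lam0 (Suc m)) a' (u (Suc m) y) = 0"
    using level unfolding uhat_Suc_smax a_def a'_def .
  then have "smax \<eta> (lam \<gamma> lam0 (Suc m)) a (u (Suc m) x) = smax \<eta> (lam \<gamma> lam0 (Suc m)) a' (u (Suc m) y)"
    by simp
  then have level_a: "\<bar>a - a'\<bar> \<le> \<bar>D\<bar>" and level_b: "\<bar>u (Suc m) x - u (Suc m) y\<bar> \<le> \<bar>D\<bar>"
    using smax_level_set[OF lam_pos[OF assms(1-3)]] by (simp_all add: D_def)
  have "v = t *\<^sub>R d + w" by (simp add: w_def)
  then have growth: "c * \<bar>t\<bar> \<le> \<bar>a - a'\<bar> + norm w"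
    unfolding a_def a'_def v_def
    by (intro uhat_growth_abs[OF assms(1-4) _ _ dir _ gx gy \<open>\<exists>l\<le>m. l \<in> P\<close>]) (use diff unit in auto)
  have "d \<bullet> d = 1" using d(1) by (simp add: norm_eq_1)
  then have "w \<bullet> w = v \<bullet> v - t\<^sup>2"
    by (simp add: w_def t_def inner_diff_left inner_diff_right inner_commute power2_eq_square)
  then have w_sq: "(norm w)\<^sup>2 = (norm v)\<^sup>2 - t\<^sup>2" by (simp add: power2_norm_eq_inner)
  have "d \<bullet> ?n = 0" using d(2) by (simp add: inner_commute)
  then have "w \<bullet> ?n = v \<bullet> ?n" by (simp add: w_def inner_diff_left)
  moreover have "\<bar>w \<bullet> ?n\<bar> \<le> norm w" using Cauchy_Schwarz_ineq2[of w ?n] unit[of "Suc m"] by simp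
  ultimately have "(v \<bullet> ?n)\<^sup>2 \<le> (norm w)\<^sup>2" by (metis abs_le_square_iff abs_norm_cancel)
  then have "0 \<le> R" using w_sq by (simp add: R_def)
  have "v \<bullet> ?n = u (Suc m) x - u (Suc m) y" using diff[of "Suc m" x y] by (simp add: v_def inner_commute)
  then have "(norm w)\<^sup>2 \<le> D\<^sup>2 + R" using level_b w_sq by (simp add: R_def abs_le_square_iff)
  then have w_le: "norm w \<le> sqrt (D\<^sup>2 + R)" by (rule real_le_rsqrt)
  have "D\<^sup>2 \<le> D\<^sup>2 + R" using \<open>0 \<le> R\<close> by simp
  then have "\<bar>D\<bar> \<le> sqrt (D\<^sup>2 + R)" by (metis real_sqrt_abs real_sqrt_le_mono)
  then have "c * \<bar>t\<bar> \<le> 2 * sqrt (D\<^sup>2 + R)" using growth level_a w_le by linarith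
  then have t_le: "\<bar>t\<bar> \<le> 2 / c * sqrt (D\<^sup>2 + R)" using \<open>0 < c\<close> by (simp add: field_simps)
  have "norm v \<le> \<bar>t\<bar> + norm w"
    using norm_triangle_ineq[of "t *\<^sub>R d" w] d(1) \<open>v = t *\<^sub>R d + w\<close> by simp
  also have "\<dots> \<le> (2 / c + 1) * sqrt (D\<^sup>2 + R)" using t_le w_le by (simp add: distrib_right)
  finally show ?thesis by (simp add: v_def D_def R_def t_def a_def a'_def)
qed

lemma level_piece_cover:
  fixes u :: "nat \<Rightarrow> 'a::euclidean_space \<Rightarrow> real"
  assumes "0 < lam0" "0 < \<gamma>" "\<gamma> \<le> 1" "real (m + 1) \<le> 2 * g * lam0" "0 < r" "0 < \<delta>" "0 < W"
    and diff: "\<And>l x y. l \<le> Suc m \<Longrightarrow> u l x - u l y = N l \<bullet> (x - y)"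
    and unit: "\<And>l. l \<le> Suc m \<Longrightarrow> norm (N l) = 1"
    and d: "norm d = 1" "N (Suc m) \<bullet> d = 0" and "0 < c"
    and dir: "\<And>l. l \<le> m \<Longrightarrow> l \<in> P \<Longrightarrow> c \<le> N l \<bullet> d"
    and b: "norm b = 1" "b \<bullet> d = 0" "b \<bullet> N (Suc m) = 0"
    and T: "\<And>x. x \<in> T \<Longrightarrow> uhat \<eta> \<gamma> lam0 u (Suc m) x = 0
      \<and> \<bar>uhat \<eta> \<gamma> lam0 u m x - u (Suc m) x\<bar> \<le> 2 / lam \<gamma> lam0 (Suc m)
      \<and> dist p x < r \<and> \<bar>b \<bullet> (x - z)\<bar> \<le> W / lam0
      \<and> gap_split m P \<alpha> g (\<lambda>l. u l x) \<and> (\<exists>l\<le>m. l \<in> P)"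
  shows "fine_cover (real DIM('a) - 1) \<delta> T (((2 / c + 1) * (DIM('a) - 1)) ^ (DIM('a) - 1)
    * 2 ^ DIM('a) * W * (1 / lam \<gamma> lam0 (Suc m)) * (1 / lam0) * r ^ (DIM('a) - 3))"
proof -
  let ?n = "N (Suc m)"
  obtain B where B: "finite B" "?n \<notin> B" "b \<notin> B" "card B + 3 = DIM('a)" "\<And>e. e \<in> B \<Longrightarrow> norm e = 1"
    "\<And>v. (norm v)\<^sup>2 = (v \<bullet> d)\<^sup>2 + (v \<bullet> ?n)\<^sup>2 + (v \<bullet> b)\<^sup>2 + (\<Sum>e\<in>B. (v \<bullet> e)\<^sup>2)"
    using orthonormal_triple_completion[OF d(1) unit[of "Suc m"] b(1)] d(2) b(2,3)
    by (auto simp: inner_commute)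
  have "?n \<noteq> b" using b(3) unit[of "Suc m"] by (auto simp: dot_square_norm[symmetric])
  define E where "E = insert ?n (insert b B)"
  have E: "finite E" "E \<noteq> {}" "card E = DIM('a) - 1" using B(1-4) \<open>?n \<noteq> b\<close> by (auto simp: E_def)
  define f where "f e x = (if e = ?n then uhat \<eta> \<gamma> lam0 u m x - u (Suc m) x else x \<bullet> e)" for e x
  define lk where "lk = lam \<gamma> lam0 (Suc m)"
  define lo where "lo e = (if e = ?n then - 2 / lk else if e = b then b \<bullet> z - W / lam0 else p \<bullet> e - r)" for e
  define hi where "hi e = (if e = ?n then 2 / lk else if e = b then b \<bullet> z + W / lam0 else p \<bullet> e + r)" for e
  have "0 < lk" using lam_pos[OF assms(1-3)] by (simp add: lk_def)
  have lip: "dist x y \<le> (2 / c + 1) * (\<Sum>e\<in>E. \<bar>f e x - f e y\<bar>)" if "x \<in> T" "y \<in> T" for x y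
  proof -
    have xy: "uhat \<eta> \<gamma> lam0 u (Suc m) x = 0" "uhat \<eta> \<gamma> lam0 u (Suc m) y = 0"
      "gap_split m P \<alpha> g (\<lambda>l. u l x)" "gap_split m P \<alpha> g (\<lambda>l. u l y)" "\<exists>l\<le>m. l \<in> P"
      using T[OF that(1)] T[OF that(2)] by blast+
    have "norm (x - y) \<le> (2 / c + 1) * sqrt ((f ?n x - f ?n y)\<^sup>2
        + ((norm (x - y))\<^sup>2 - ((x - y) \<bullet> d)\<^sup>2 - ((x - y) \<bullet> ?n)\<^sup>2))"
      using level_set_inverse_lipschitz[where u=u and N=N, OF assms(1-4) diff unit d \<open>0 < c\<close> dir xy]
      by (simp add: f_def)
    also have "(f ?n x - f ?n y)\<^sup>2 + ((norm (x - y))\<^sup>2 - ((x - y) \<bullet> d)\<^sup>2 - ((x - y) \<bullet> ?n)\<^sup>2)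
        = (\<Sum>e\<in>E. (f e x - f e y)\<^sup>2)"
    proof -
      have "(\<Sum>e\<in>B. (f e x - f e y)\<^sup>2) = (\<Sum>e\<in>B. ((x - y) \<bullet> e)\<^sup>2)"
        using B(2) by (intro sum.cong) (auto simp: f_def inner_diff_left)
      then show ?thesis
        using B(1-3) \<open>?n \<noteq> b\<close> B(6)[of "x - y"] by (simp add: E_def f_def inner_diff_left)
    qed
    also have "sqrt \<dots> \<le> (\<Sum>e\<in>E. \<bar>f e x - f e y\<bar>)"
      using L2_set_le_sum_abs[of "\<lambda>e. f e x - f e y" E] by (simp add: L2_set_def)
    finally show ?thesis using \<open>0 < c\<close> by (simp add: dist_norm mult_left_mono add_pos_nonneg)
  qed
  have range: "lo e \<le> f e x \<and> f e x \<le> hi e" if "x \<in> T" "e \<in> E" for x e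
  proof -
    have "norm e = 1" using that(2) B(5) b(1) unit[of "Suc m"] by (auto simp: E_def)
    then have "\<bar>(x - p) \<bullet> e\<bar> \<le> norm (x - p)" using Cauchy_Schwarz_ineq2[of "x - p" e] by simp
    moreover have "norm (x - p) < r" using T[OF that(1)] by (simp add: dist_norm norm_minus_commute)
    ultimately show ?thesis using T[OF that(1)]
      by (auto simp: lo_def hi_def f_def lk_def inner_diff_left inner_diff_right inner_commute abs_le_iff)
  qed
  have lo_hi: "lo e < hi e" for e
    using \<open>0 < lk\<close> \<open>0 < W\<close> \<open>0 < lam0\<close> \<open>0 < r\<close> by (auto simp: lo_def hi_def)
  have "0 < 2 / c + 1" using \<open>0 < c\<close> by (simp add: add_pos_nonneg)
  then have cover: "fine_cover (card E) \<delta> T (((2 / c + 1) * card E) ^ card E * (\<Prod>e\<in>E. hi e - lo e))"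
    using coordinate_grid_cover[OF E(1,2) _ \<open>0 < \<delta>\<close> lo_hi range lip] by blast
  have "(\<Prod>e\<in>B. hi e - lo e) = (\<Prod>e\<in>B. 2 * r)"
    using B(2,3) by (intro prod.cong) (auto simp: lo_def hi_def)
  then have "(\<Prod>e\<in>E. hi e - lo e) = (4 / lk) * (2 * W / lam0) * (2 * r) ^ card B"
    using B(1-3) \<open>?n \<noteq> b\<close> by (simp add: E_def lo_def hi_def)
  moreover have "card B = DIM('a) - 3" using B(4) by simp
  moreover have "(2::real) ^ DIM('a) = 2 ^ (DIM('a) - 3) * 8"
  proof -
    have "DIM('a) = (DIM('a) - 3) + 3" using B(4) by simp
    then have "(2::real) ^ DIM('a) = 2 ^ (DIM('a) - 3) * 2 ^ 3" by (metis power_add)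
    then show ?thesis by simp
  qed
  ultimately show ?thesis
    using cover E(3) B(4) by (simp add: lk_def power_mult_distrib field_simps)
qed

end

section \<open>The strip near a corner of the polytope\<close>

lemma lincomb_sign:
  fixes a b c x y z :: real
  assumes "a * x + b * y + c * z = 0" "0 < x" "y \<le> 0" "z \<le> 0"
  shows "b \<le> 0 \<Longrightarrow> c \<le> 0 \<Longrightarrow> a \<le> 0" "0 \<le> b \<Longrightarrow> 0 \<le> c \<Longrightarrow> 0 \<le> a"
proof -
  assume "b \<le> 0" "c \<le> 0"
  then have "0 \<le> b * y" "0 \<le> c * z" using assms by (simp_all add: mult_nonpos_nonpos)
  then have "a * x \<le> 0" using assms(1) by linarith
  then show "a \<le> 0" using assms(2) by (simp add: mult_le_0_iff)
next
  assume "0 \<le> b" "0 \<le> c"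
  then have "b * y \<le> 0" "c * z \<le> 0" using assms by (simp_all add: mult_nonneg_nonpos)
  then have "0 \<le> a * x" using assms(1) by linarith
  then show "0 \<le> a" using assms(2) by (simp add: zero_le_mult_iff)
qed

lemma lincomb_negative_zero:
  fixes a b c x y z :: real
  assumes "a * x + b * y + c * z = 0" "x < 0" "y < 0" "z < 0"
  shows "0 \<le> a \<Longrightarrow> 0 \<le> b \<Longrightarrow> 0 \<le> c \<Longrightarrow> a = 0 \<and> b = 0 \<and> c = 0"
    "a \<le> 0 \<Longrightarrow> b \<le> 0 \<Longrightarrow> c \<le> 0 \<Longrightarrow> a = 0 \<and> b = 0 \<and> c = 0"
proof -
  assume "0 \<le> a" "0 \<le> b" "0 \<le> c"
  then have "a * x \<le> 0" "b * y \<le> 0" "c * z \<le> 0" using assms by (simp_all add: mult_nonneg_nonpos)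
  then have "a * x = 0" "b * y = 0" "c * z = 0" using assms(1) by linarith+
  then show "a = 0 \<and> b = 0 \<and> c = 0" using assms(2-4) by simp
next
  assume "a \<le> 0" "b \<le> 0" "c \<le> 0"
  then have "0 \<le> a * x" "0 \<le> b * y" "0 \<le> c * z" using assms by (simp_all add: mult_nonpos_nonpos)
  then have "a * x = 0" "b * y = 0" "c * z = 0" using assms(1) by linarith+
  then show "a = 0 \<and> b = 0 \<and> c = 0" using assms(2-4) by simp
qed

text \<open>A vanishing combination can have neither all coefficients of one sign (first row) nor a
  coefficient whose sign no other coefficient shares (the row where only its term is positive).\<close>

lemma lincomb_sign_pattern_zero:
  fixes a b c :: real
  assumes "a * p1 + b * p2 + c * p3 = 0" "p1 < 0" "p2 < 0" "p3 < 0"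
    and "a * q1 + b * q2 + c * q3 = 0" "0 < q1" "q2 \<le> 0" "q3 \<le> 0"
    and "a * r1 + b * r2 + c * r3 = 0" "r1 \<le> 0" "0 < r2" "r3 \<le> 0"
    and "a * s1 + b * s2 + c * s3 = 0" "s1 \<le> 0" "s2 \<le> 0" "0 < s3"
  shows "a = 0 \<and> b = 0 \<and> c = 0"
proof -
  have "b * r2 + a * r1 + c * r3 = 0" "c * s3 + a * s1 + b * s2 = 0" using assms(9,13) by linarith+
  note sign = lincomb_sign[OF assms(5-8)] lincomb_sign[OF this(1) assms(11,10,12)]
    lincomb_sign[OF this(2) assms(16,14,15)] lincomb_negative_zero[OF assms(1-4)]
  have "0 \<le> a \<or> a \<le> 0" "0 \<le> b \<or> b \<le> 0" "0 \<le> c \<or> c \<le> 0" by auto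
  then show ?thesis using sign by blast
qed

text \<open>\<open>facet_witness\<close> and \<open>adjacent_obtuse\<close> are conditions (a) and (c) of the setting.\<close>

locale polytope_corner = soft_abs \<eta>
  for \<eta> :: "real \<Rightarrow> real" +
  fixes u :: "nat \<Rightarrow> 'a::euclidean_space \<Rightarrow> real" and N :: "nat \<Rightarrow> 'a"
    and q i j k :: nat and \<Omega> :: "'a set"
  assumes u_diff: "\<And>m x y. m \<le> q \<Longrightarrow> u m x - u m y = N m \<bullet> (x - y)"
    and N_unit: "\<And>m. m \<le> q \<Longrightarrow> norm (N m) = 1"
    and Omega_eq: "\<Omega> = (\<Inter>m\<in>{0..q}. {x. u m x \<le> 0})"
    and compact_Omega: "compact \<Omega>"
    and interior_Omega: "interior \<Omega> \<noteq> {}"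
    and facet_witness: "\<And>l. l \<le> q \<Longrightarrow> \<exists>x. 0 < u l x \<and> (\<forall>m\<le>q. m \<noteq> l \<longrightarrow> u m x \<le> 0)"
    and adjacent_obtuse: "\<And>a b x. a < b \<Longrightarrow> b \<le> q \<Longrightarrow> x \<in> \<Omega> \<Longrightarrow> u a x = 0 \<Longrightarrow> u b x = 0 \<Longrightarrow> N a \<bullet> N b \<le> 0"
    and ijk: "i \<le> q" "j \<le> q" "k \<le> q" "i \<noteq> j" "j \<noteq> k" "i \<noteq> k" "1 \<le> k"
begin

definition strip :: "real \<Rightarrow> real \<Rightarrow> 'a \<Rightarrow> real \<Rightarrow> 'a set" where
  "strip \<gamma> lam0 p r = \<Omega> \<inter> {x. uhat \<eta> \<gamma> lam0 u k x = 0}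
     \<inter> {x. - 2 / lam \<gamma> lam0 k \<le> uhat \<eta> \<gamma> lam0 u (k - 1) x \<and> uhat \<eta> \<gamma> lam0 u (k - 1) x \<le> 0}
     \<inter> {x. - 2 / lam \<gamma> lam0 k \<le> u k x \<and> u k x \<le> 0}
     \<inter> {x. - 4 / lam0 \<le> u j x \<and> u j x \<le> 0}
     \<inter> {x. - 6 / lam0 \<le> u i x \<and> u i x \<le> 0}
     \<inter> ball p r"

definition active_piece :: "real \<Rightarrow> real \<Rightarrow> nat set \<Rightarrow> 'a set \<Rightarrow> 'a set" where
  "active_piece g \<alpha> P S = {x \<in> S. gap_split q P \<alpha> g (\<lambda>m. u m x)}"

definition has_ascent_direction :: "nat set \<Rightarrow> bool" where
  "has_ascent_direction P \<longleftrightarrow> (\<exists>d. norm d = 1 \<and> N k \<bullet> d = 0 \<and> (\<forall>m\<in>P. m < k \<longrightarrow> 0 < N m \<bullet> d))"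

lemma mem_Omega: "x \<in> \<Omega> \<longleftrightarrow> (\<forall>m\<le>q. u m x \<le> 0)"
  by (auto simp: Omega_eq)

lemma continuous_on_u:
  assumes "m \<le> q"
  shows "continuous_on A (u m)"
proof -
  have "u m = (\<lambda>x. N m \<bullet> x + u m 0)"
  proof
    show "u m x = N m \<bullet> x + u m 0" for x using u_diff[OF assms, of x 0] by (simp add: eq_diff_eq)
  qed
  then show ?thesis by (subst \<open>u m = _\<close>) (intro continuous_intros)
qed

lemma strictly_interior_point:
  obtains x0 \<beta> where "0 < \<beta>" "\<And>m. m \<le> q \<Longrightarrow> u m x0 \<le> - \<beta>"
proof -
  obtain y e where "0 < e" "ball y e \<subseteq> \<Omega>" using interior_Omega by (meson ex_in_conv mem_interior)
  have neg: "u m y < 0" if "m \<le> q" for m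
  proof -
    have "N m \<bullet> N m = 1" using N_unit[OF that] by (simp add: norm_eq_1)
    then have "u m (y + (e / 2) *\<^sub>R N m) = u m y + e / 2" using u_diff[OF that, of "y + (e / 2) *\<^sub>R N m" y] by simp
    moreover have "y + (e / 2) *\<^sub>R N m \<in> ball y e" using \<open>0 < e\<close> N_unit[OF that] by (simp add: dist_norm)
    then have "u m (y + (e / 2) *\<^sub>R N m) \<le> 0" using \<open>ball y e \<subseteq> \<Omega>\<close> that by (auto simp: mem_Omega)
    ultimately show ?thesis using \<open>0 < e\<close> by linarith
  qed
  define \<beta> where "\<beta> = Min ((\<lambda>m. - u m y) ` {0..q})"
  have "0 < \<beta>" using neg by (simp add: \<beta>_def)
  moreover have "u m y \<le> - \<beta>" if "m \<le> q" for m
  proof -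
    have "\<beta> \<le> - u m y" unfolding \<beta>_def using that by (intro Min_le) auto
    then show ?thesis by linarith
  qed
  ultimately show thesis using that by blast
qed

lemma obtuse_pairs_separated:
  obtains \<tau> where "0 < \<tau>" "\<And>m x. m < k \<Longrightarrow> 0 < N m \<bullet> N k \<Longrightarrow> x \<in> \<Omega> \<Longrightarrow> min (u m x) (u k x) \<le> - \<tau>"
proof -
  let ?M = "{m. m < k \<and> 0 < N m \<bullet> N k}"
  have "finite ?M" by (rule finite_subset[of _ "{..<k}"]) auto
  moreover have "continuous_on \<Omega> (\<lambda>x. min (u m x) (u k x))" if "m \<in> ?M" for m
    using that ijk by (intro continuous_on_min continuous_on_u) auto
  moreover have "min (u m x) (u k x) < 0" if "m \<in> ?M" "x \<in> \<Omega>" for m x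
  proof -
    have "u m x \<le> 0" "u k x \<le> 0" using that ijk by (auto simp: mem_Omega)
    moreover have "\<not> (u m x = 0 \<and> u k x = 0)" using adjacent_obtuse[of m k x] that ijk by force
    ultimately show ?thesis by linarith
  qed
  ultimately obtain \<tau> where "0 < \<tau>" "\<And>m x. m \<in> ?M \<Longrightarrow> x \<in> \<Omega> \<Longrightarrow> min (u m x) (u k x) \<le> - \<tau>"
    using compact_uniformly_negative[OF compact_Omega, of ?M "\<lambda>m x. min (u m x) (u k x)"] by blast
  then show thesis using that by blast
qed

text \<open>Near facet \<open>k\<close>, the facets \<open>m < k\<close> that are nearly active meet facet \<open>k\<close> at an obtuse
  angle, so moving from an interior point towards the current point, projected onto the
  hyperplane of facet \<open>k\<close>, increases all of them.\<close>

lemma near_corner_ascent_direction: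
  obtains \<tau> where "0 < \<tau>"
    "\<And>x P. x \<in> \<Omega> \<Longrightarrow> - \<tau> < u k x \<Longrightarrow> (\<And>m. m \<in> P \<Longrightarrow> m < k \<Longrightarrow> - \<tau> < u m x) \<Longrightarrow> \<exists>m\<in>P. m < k \<Longrightarrow> has_ascent_direction P"
proof -
  obtain x0 \<beta> where \<beta>: "0 < \<beta>" "\<And>m. m \<le> q \<Longrightarrow> u m x0 \<le> - \<beta>" using strictly_interior_point by blast
  obtain \<tau>1 where \<tau>1: "0 < \<tau>1"
    "\<And>m x. m < k \<Longrightarrow> 0 < N m \<bullet> N k \<Longrightarrow> x \<in> \<Omega> \<Longrightarrow> min (u m x) (u k x) \<le> - \<tau>1"
    using obtuse_pairs_separated by blast
  show thesis
  proof (rule that[of "min \<beta> \<tau>1"])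
    show "0 < min \<beta> \<tau>1" using \<beta> \<tau>1 by simp
    fix x P
    assume x: "x \<in> \<Omega>" "- min \<beta> \<tau>1 < u k x" and P: "\<And>m. m \<in> P \<Longrightarrow> m < k \<Longrightarrow> - min \<beta> \<tau>1 < u m x"
      and "\<exists>m\<in>P. m < k"
    define e where "e = x - x0"
    define dx where "dx = e - (N k \<bullet> e) *\<^sub>R N k"
    have "0 < N k \<bullet> e" using u_diff[of k x x0] \<beta>(2)[of k] x(2) ijk by (simp add: e_def)
    have "N k \<bullet> N k = 1" using N_unit ijk by (simp add: norm_eq_1)
    then have "N k \<bullet> dx = 0" by (simp add: dx_def inner_diff_right)
    have pos: "0 < N m \<bullet> dx" if "m \<in> P" "m < k" for m
    proof -
      have "m \<le> q" using that ijk by simp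
      have "0 < N m \<bullet> e" using u_diff[OF \<open>m \<le> q\<close>, of x x0] \<beta>(2)[OF \<open>m \<le> q\<close>] P[OF that] by (simp add: e_def)
      moreover have "N m \<bullet> N k \<le> 0"
      proof (rule ccontr)
        assume "\<not> N m \<bullet> N k \<le> 0"
        then have "min (u m x) (u k x) \<le> - \<tau>1" using \<tau>1(2) that(2) x(1) by simp
        then show False using P[OF that] x(2) by (auto simp: min_def split: if_splits)
      qed
      then have "(N k \<bullet> e) * (N m \<bullet> N k) \<le> 0" using \<open>0 < N k \<bullet> e\<close> by (simp add: mult_nonneg_nonpos)
      ultimately show ?thesis by (simp add: dx_def inner_diff_right)
    qed
    then have "dx \<noteq> 0" using \<open>\<exists>m\<in>P. m < k\<close> by force
    then show "has_ascent_direction P" unfolding has_ascent_direction_def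
      using \<open>N k \<bullet> dx = 0\<close> pos by (intro exI[of _ "dx /\<^sub>R norm dx"]) auto
  qed
qed

lemma normals_independent:
  assumes "u i z = 0" "u j z = 0" "u k z = 0" "a *\<^sub>R N i + b *\<^sub>R N j + c *\<^sub>R N k = 0"
  shows "a = 0 \<and> b = 0 \<and> c = 0"
proof -
  have comb: "a * u i x + b * u j x + c * u k x = 0" for x
  proof -
    have "a * u i x + b * u j x + c * u k x = (a *\<^sub>R N i + b *\<^sub>R N j + c *\<^sub>R N k) \<bullet> (x - z)"
      using u_diff[of i x z] u_diff[of j x z] u_diff[of k x z] assms(1-3) ijk
      by (simp add: inner_add_left)
    then show ?thesis using assms(4) by simp
  qed
  obtain x0 \<beta> where \<beta>: "0 < \<beta>" "\<And>m. m \<le> q \<Longrightarrow> u m x0 \<le> - \<beta>" using strictly_interior_point by blast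
  have "u m x0 < 0" if "m \<le> q" for m using \<beta>(1) \<beta>(2)[OF that] by linarith
  then have "u i x0 < 0" "u j x0 < 0" "u k x0 < 0" using ijk by auto
  moreover obtain xi where "0 < u i xi" "u j xi \<le> 0" "u k xi \<le> 0" using facet_witness[of i] ijk by auto
  moreover obtain xj where "u i xj \<le> 0" "0 < u j xj" "u k xj \<le> 0" using facet_witness[of j] ijk by auto
  moreover obtain xk where "u i xk \<le> 0" "u j xk \<le> 0" "0 < u k xk" using facet_witness[of k] ijk by auto
  ultimately show ?thesis
    using lincomb_sign_pattern_zero[OF comb[of x0] _ _ _ comb[of xi] _ _ _ comb[of xj] _ _ _ comb[of xk]]
    by blast
qed

lemma strip_empty_away_from_corner:
  assumes "\<not> (\<exists>z\<in>\<Omega>. u i z = 0 \<and> u j z = 0 \<and> u k z = 0)"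
  obtains lbar where "\<And>\<gamma> lam0 p r. 0 < \<gamma> \<Longrightarrow> \<gamma> \<le> 1 \<Longrightarrow> lbar \<le> lam0 \<Longrightarrow> strip \<gamma> lam0 p r = {}"
proof -
  define F where "F x = min (u i x) (min (u j x) (u k x))" for x
  obtain \<tau> where \<tau>: "0 < \<tau>" "\<And>x. x \<in> \<Omega> \<Longrightarrow> F x \<le> - \<tau>"
  proof (rule compact_uniformly_negative[OF compact_Omega, of "{()}" "\<lambda>_. F"])
    show "continuous_on \<Omega> F" unfolding F_def using ijk by (intro continuous_on_min continuous_on_u) auto
    show "F x < 0" if "x \<in> \<Omega>" for x
    proof -
      have "u i x \<le> 0" "u j x \<le> 0" "u k x \<le> 0" using that ijk by (auto simp: mem_Omega)
      moreover have "\<not> (u i x = 0 \<and> u j x = 0 \<and> u k x = 0)" using assms that by blast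
      ultimately show ?thesis unfolding F_def min_less_iff_disj by linarith
    qed
  qed (use that in auto)
  show thesis
  proof (rule that[of "7 / \<tau>"])
    fix \<gamma> lam0 :: real and p r assume "0 < \<gamma>" "\<gamma> \<le> 1" "7 / \<tau> \<le> lam0"
    moreover have "0 < 7 / \<tau>" using \<tau>(1) by simp
    ultimately have "0 < lam0" by linarith
    have "7 \<le> \<tau> * lam0" using \<open>7 / \<tau> \<le> lam0\<close> \<tau>(1) by (simp add: field_simps)
    then have "6 / lam0 < \<tau>" using \<open>0 < lam0\<close> by (simp add: field_simps)
    have "2 / lam \<gamma> lam0 k \<le> 2 / lam0" using divide_lam_le[OF \<open>0 < lam0\<close> \<open>0 < \<gamma>\<close> \<open>\<gamma> \<le> 1\<close>] by simp
    moreover have "4 / lam0 \<le> 6 / lam0" "2 / lam0 \<le> 6 / lam0" using \<open>0 < lam0\<close> by (simp_all add: frac_le)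
    ultimately have "- 6 / lam0 \<le> F x" if "x \<in> strip \<gamma> lam0 p r" for x
      using that by (simp add: strip_def F_def)
    moreover have "x \<in> \<Omega>" if "x \<in> strip \<gamma> lam0 p r" for x using that by (simp add: strip_def)
    ultimately show "strip \<gamma> lam0 p r = {}" using \<tau>(2) \<open>6 / lam0 < \<tau>\<close> by force
  qed
qed

lemma strip_subset_pieces:
  assumes "0 < g"
  shows "S \<subseteq> (\<Union>(s, P)\<in>{0..q+1} \<times> Pow {0..q}. active_piece g (- (2 * real s + 1) * g) P S)"
proof
  fix x assume "x \<in> S"
  obtain s where s: "s \<le> q + 1"
    "\<And>m. m \<le> q \<Longrightarrow> \<not> (- (2 * real s + 2) * g \<le> u m x \<and> u m x < - (2 * real s + 1) * g)"
    using gap_level_exists[where v="\<lambda>m. u m x" and q=q, OF assms] by blast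
  define P where "P = {m. m \<le> q \<and> - (2 * real s + 1) * g \<le> u m x}"
  have "gap_split q P (- (2 * real s + 1) * g) g (\<lambda>m. u m x)"
    unfolding gap_split_def
  proof (intro allI impI conjI)
    fix m assume "m \<le> q"
    show "- (2 * real s + 1) * g \<le> u m x" if "m \<in> P" using that by (simp add: P_def)
    show "u m x < - (2 * real s + 1) * g - g" if "m \<notin> P"
    proof -
      have "u m x < - (2 * real s + 1) * g" using that \<open>m \<le> q\<close> by (simp add: P_def)
      moreover have "- (2 * real s + 1) * g - g = - (2 * real s + 2) * g" by (simp add: algebra_simps)
      ultimately show ?thesis using s(2)[OF \<open>m \<le> q\<close>] by linarith
    qed
  qed
  then have "x \<in> active_piece g (- (2 * real s + 1) * g) P S"
    using \<open>x \<in> S\<close> by (simp add: active_piece_def)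
  then show "x \<in> (\<Union>(s, P)\<in>{0..q+1} \<times> Pow {0..q}. active_piece g (- (2 * real s + 1) * g) P S)"
    using s(1) by (intro UN_I[of "(s, P)"]) (auto simp: P_def)
qed

lemma piece_has_active_index:
  assumes x: "x \<in> active_piece g \<alpha> P (strip \<gamma> lam0 p r)"
    and "\<alpha> \<le> - g" "real q + 2 \<le> g * lam0" "0 < lam0" "0 < \<gamma>" "\<gamma> \<le> 1"
  shows "\<exists>l\<le>k - 1. l \<in> P"
proof (rule ccontr)
  assume none: "\<not> (\<exists>l\<le>k - 1. l \<in> P)"
  have "u l x \<le> - 2 * g" if "l \<le> k - 1" for l
  proof -
    have "l \<le> q" "l \<notin> P" using that none ijk by auto
    moreover have "gap_split q P \<alpha> g (\<lambda>m. u m x)" using x by (simp add: active_piece_def)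
    ultimately have "u l x < \<alpha> - g" by (simp add: gap_split_def)
    then show ?thesis using assms(2) by linarith
  qed
  then have "uhat \<eta> \<gamma> lam0 u (k - 1) x \<le> - 2 * g + real (k - 1) / (2 * lam0)"
    by (rule uhat_le[OF assms(4-6)])
  moreover have "real (k - 1) / (2 * lam0) \<le> real q / (2 * lam0)"
    using ijk \<open>0 < lam0\<close> by (intro divide_right_mono) auto
  moreover have "- 2 / lam \<gamma> lam0 k \<le> uhat \<eta> \<gamma> lam0 u (k - 1) x"
    using x by (simp add: active_piece_def strip_def)
  moreover have "2 / lam \<gamma> lam0 k \<le> 2 / lam0" using divide_lam_le[OF assms(4-6)] by simp
  ultimately have "- 2 / lam0 \<le> - 2 * g + real q / (2 * lam0)" by linarith
  then have "- 2 \<le> - 2 * g * lam0 + real q / 2" using \<open>0 < lam0\<close> by (simp add: field_simps)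
  then show False using assms(3) by linarith
qed

end

context polytope_corner
begin

lemma strip_transversal_bound:
  assumes corner: "u i z = 0" "u j z = 0" "u k z = 0" and x: "x \<in> strip \<gamma> lam0 p r"
    and "0 < lam0" "0 < \<gamma>" "\<gamma> \<le> 1" "0 < W"
    and bound: "\<And>v. \<bar>b \<bullet> v\<bar> \<le> W * (\<bar>N i \<bullet> v\<bar> + \<bar>N j \<bullet> v\<bar> + \<bar>N k \<bullet> v\<bar>)"
  shows "\<bar>b \<bullet> (x - z)\<bar> \<le> 12 * W / lam0"
proof -
  have "N i \<bullet> (x - z) = u i x" "N j \<bullet> (x - z) = u j x" "N k \<bullet> (x - z) = u k x"
    using u_diff[of i x z] u_diff[of j x z] u_diff[of k x z] corner ijk by simp_all
  then have "\<bar>b \<bullet> (x - z)\<bar> \<le> W * (\<bar>u i x\<bar> + \<bar>u j x\<bar> + \<bar>u k x\<bar>)" using bound[of "x - z"] by simp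
  also have "\<dots> \<le> W * (12 / lam0)"
  proof (rule mult_left_mono)
    show "\<bar>u i x\<bar> + \<bar>u j x\<bar> + \<bar>u k x\<bar> \<le> 12 / lam0"
      using x divide_lam_le[OF assms(5-7), of 2 k] by (simp add: strip_def add_divide_distrib[symmetric])
  qed (use \<open>0 < W\<close> in simp)
  finally show ?thesis by (simp add: mult.commute)
qed

lemma active_piece_on_level_set:
  assumes k: "k = Suc m" and x: "x \<in> active_piece g \<alpha> P (strip \<gamma> lam0 p r)"
    and "\<alpha> \<le> - g" "real q + 2 \<le> g * lam0" "0 < lam0" "0 < \<gamma>" "\<gamma> \<le> 1"
  shows "uhat \<eta> \<gamma> lam0 u (Suc m) x = 0" "\<bar>uhat \<eta> \<gamma> lam0 u m x - u (Suc m) x\<bar> \<le> 2 / lam \<gamma> lam0 (Suc m)"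
    "gap_split m P \<alpha> g (\<lambda>l. u l x)" "\<exists>l\<le>m. l \<in> P"
proof -
  have "x \<in> strip \<gamma> lam0 p r" using x by (simp add: active_piece_def)
  then have "uhat \<eta> \<gamma> lam0 u k x = 0" "- 2 / lam \<gamma> lam0 k \<le> uhat \<eta> \<gamma> lam0 u (k - 1) x"
    "uhat \<eta> \<gamma> lam0 u (k - 1) x \<le> 0" "- 2 / lam \<gamma> lam0 k \<le> u k x" "u k x \<le> 0"
    by (simp_all add: strip_def)
  then have "uhat \<eta> \<gamma> lam0 u k x = 0" "\<bar>uhat \<eta> \<gamma> lam0 u (k - 1) x - u k x\<bar> \<le> 2 / lam \<gamma> lam0 k"
    by (simp_all add: abs_le_iff)
  then show "uhat \<eta> \<gamma> lam0 u (Suc m) x = 0"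
    "\<bar>uhat \<eta> \<gamma> lam0 u m x - u (Suc m) x\<bar> \<le> 2 / lam \<gamma> lam0 (Suc m)"
    using k by simp_all
  show "gap_split m P \<alpha> g (\<lambda>l. u l x)"
    using x k ijk by (auto simp: active_piece_def gap_split_def)
  show "\<exists>l\<le>m. l \<in> P" using piece_has_active_index[OF x assms(3-7)] k by simp
qed

lemma ascent_piece_cover:
  assumes corner: "u i z = 0" "u j z = 0" "u k z = 0" and "has_ascent_direction P"
  obtains K where "0 \<le> K"
    "\<And>\<gamma> lam0 p r g \<alpha> \<delta>. 0 < \<gamma> \<Longrightarrow> \<gamma> \<le> 1 \<Longrightarrow> 0 < lam0 \<Longrightarrow> 0 < r \<Longrightarrow> 0 < \<delta> \<Longrightarrow> \<alpha> \<le> - g \<Longrightarrow>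
      real q + 2 \<le> g * lam0 \<Longrightarrow> fine_cover (real DIM('a) - 1) \<delta> (active_piece g \<alpha> P (strip \<gamma> lam0 p r))
        (K * (1 / lam \<gamma> lam0 k) * (1 / lam0) * r ^ (DIM('a) - 3))"
proof -
  obtain m where k: "k = Suc m" using ijk(7) by (cases k) auto
  obtain d where d: "norm d = 1" "N k \<bullet> d = 0" "\<And>l. l \<in> P \<Longrightarrow> l < k \<Longrightarrow> 0 < N l \<bullet> d"
    using \<open>has_ascent_direction P\<close> by (auto simp: has_ascent_direction_def)
  define c where "c = Min (insert 1 ((\<lambda>l. N l \<bullet> d) ` (P \<inter> {..<k})))"
  have "0 < c" using d(3) by (auto simp: c_def)
  have dir: "c \<le> N l \<bullet> d" if "l \<le> m" "l \<in> P" for l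
    using that k unfolding c_def by (intro Min_le) auto
  have "\<And>x y z'. x *\<^sub>R N i + y *\<^sub>R N j + z' *\<^sub>R N k = 0 \<Longrightarrow> x = 0 \<and> y = 0 \<and> z' = 0"
    by (rule normals_independent[OF corner])
  then obtain b W where b: "norm b = 1" "b \<bullet> d = 0" "b \<bullet> N k = 0" "0 < W"
    "\<And>v. \<bar>b \<bullet> v\<bar> \<le> W * (\<bar>N i \<bullet> v\<bar> + \<bar>N j \<bullet> v\<bar> + \<bar>N k \<bullet> v\<bar>)"
    using unit_vector_orthogonal_bound[OF _ N_unit[OF ijk(3)] d(2)] by blast
  show thesis
  proof (rule that[of "((2 / c + 1) * (DIM('a) - 1)) ^ (DIM('a) - 1) * 2 ^ DIM('a) * (12 * W)"])
    show "0 \<le> ((2 / c + 1) * (DIM('a) - 1)) ^ (DIM('a) - 1) * 2 ^ DIM('a) * (12 * W)"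
      using \<open>0 < c\<close> \<open>0 < W\<close> by simp
    fix \<gamma> lam0 :: real and p :: 'a and r g \<alpha> \<delta> :: real
    assume \<gamma>: "0 < \<gamma>" "\<gamma> \<le> 1" and "0 < lam0" "0 < r" "0 < \<delta>" "\<alpha> \<le> - g" and g: "real q + 2 \<le> g * lam0"
    have "fine_cover (real DIM('a) - 1) \<delta> (active_piece g \<alpha> P (strip \<gamma> lam0 p r))
        (((2 / c + 1) * (DIM('a) - 1)) ^ (DIM('a) - 1) * 2 ^ DIM('a) * (12 * W)
          * (1 / lam \<gamma> lam0 (Suc m)) * (1 / lam0) * r ^ (DIM('a) - 3))"
    proof (rule level_piece_cover[where u=u and N=N and d=d and c=c and P=P and \<alpha>=\<alpha> and g=g
        and b=b and z=z])
      show "real (m + 1) \<le> 2 * g * lam0" using g k ijk by simp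
      show "u l x - u l y = N l \<bullet> (x - y)" "norm (N l) = 1" if "l \<le> Suc m" for l x y
        using u_diff N_unit that k ijk by auto
      show "N (Suc m) \<bullet> d = 0" "b \<bullet> N (Suc m) = 0" using d(2) b(3) k by simp_all
      fix x assume x: "x \<in> active_piece g \<alpha> P (strip \<gamma> lam0 p r)"
      then have "x \<in> strip \<gamma> lam0 p r" by (simp add: active_piece_def)
      then have "dist p x < r" "\<bar>b \<bullet> (x - z)\<bar> \<le> 12 * W / lam0"
        using strip_transversal_bound[OF corner _ \<open>0 < lam0\<close> \<gamma> \<open>0 < W\<close> b(5)] by (simp_all add: strip_def)
      then show "uhat \<eta> \<gamma> lam0 u (Suc m) x = 0
        \<and> \<bar>uhat \<eta> \<gamma> lam0 u m x - u (Suc m) x\<bar> \<le> 2 / lam \<gamma> lam0 (Suc m)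
        \<and> dist p x < r \<and> \<bar>b \<bullet> (x - z)\<bar> \<le> 12 * W / lam0
        \<and> gap_split m P \<alpha> g (\<lambda>l. u l x) \<and> (\<exists>l\<le>m. l \<in> P)"
        using active_piece_on_level_set[OF k x \<open>\<alpha> \<le> - g\<close> g \<open>0 < lam0\<close> \<gamma>] by blast
    qed (use d(1) \<open>0 < c\<close> dir b(1,2) \<open>0 < W\<close> \<open>0 < lam0\<close> \<gamma> \<open>0 < r\<close> \<open>0 < \<delta>\<close> in auto)
    then show "fine_cover (real DIM('a) - 1) \<delta> (active_piece g \<alpha> P (strip \<gamma> lam0 p r))
        (((2 / c + 1) * (DIM('a) - 1)) ^ (DIM('a) - 1) * 2 ^ DIM('a) * (12 * W)
          * (1 / lam \<gamma> lam0 k) * (1 / lam0) * r ^ (DIM('a) - 3))"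
      using k by simp
  qed
qed

lemma piece_cover_constants:
  assumes corner: "u i z = 0" "u j z = 0" "u k z = 0"
  obtains K where "\<And>P. 0 \<le> K P"
    "\<And>P \<gamma> lam0 p r g \<alpha> \<delta>. has_ascent_direction P \<Longrightarrow> 0 < \<gamma> \<Longrightarrow> \<gamma> \<le> 1 \<Longrightarrow> 0 < lam0 \<Longrightarrow> 0 < r \<Longrightarrow> 0 < \<delta> \<Longrightarrow>
      \<alpha> \<le> - g \<Longrightarrow> real q + 2 \<le> g * lam0 \<Longrightarrow> fine_cover (real DIM('a) - 1) \<delta>
        (active_piece g \<alpha> P (strip \<gamma> lam0 p r)) (K P * (1 / lam \<gamma> lam0 k) * (1 / lam0) * r ^ (DIM('a) - 3))"
proof -
  define bound where "bound P K \<longleftrightarrow> 0 \<le> K \<and> (has_ascent_direction P \<longrightarrow> (\<forall>\<gamma> lam0 p r g \<alpha> \<delta>. 0 < \<gamma> \<longrightarrow>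
      \<gamma> \<le> 1 \<longrightarrow> 0 < lam0 \<longrightarrow> 0 < r \<longrightarrow> 0 < \<delta> \<longrightarrow> \<alpha> \<le> - g \<longrightarrow> real q + 2 \<le> g * lam0 \<longrightarrow>
      fine_cover (real DIM('a) - 1) \<delta> (active_piece g \<alpha> P (strip \<gamma> lam0 p r))
        (K * (1 / lam \<gamma> lam0 k) * (1 / lam0) * r ^ (DIM('a) - 3))))" for P K
  have "\<exists>K. bound P K" for P
  proof (cases "has_ascent_direction P")
    case True
    then show ?thesis
    proof (rule ascent_piece_cover[OF corner])
      fix K assume "0 \<le> K" "\<And>\<gamma> lam0 p r g \<alpha> \<delta>. 0 < \<gamma> \<Longrightarrow> \<gamma> \<le> 1 \<Longrightarrow> 0 < lam0 \<Longrightarrow> 0 < r \<Longrightarrow> 0 < \<delta> \<Longrightarrow>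
        \<alpha> \<le> - g \<Longrightarrow> real q + 2 \<le> g * lam0 \<Longrightarrow> fine_cover (real DIM('a) - 1) \<delta>
          (active_piece g \<alpha> P (strip \<gamma> lam0 p r)) (K * (1 / lam \<gamma> lam0 k) * (1 / lam0) * r ^ (DIM('a) - 3))"
      then show ?thesis unfolding bound_def by blast
    qed
  qed (auto simp: bound_def)
  then obtain K where "\<And>P. bound P (K P)" by metis
  then have K: "0 \<le> K P" "has_ascent_direction P \<Longrightarrow> \<forall>\<gamma> lam0 p r g \<alpha> \<delta>. 0 < \<gamma> \<longrightarrow> \<gamma> \<le> 1 \<longrightarrow> 0 < lam0 \<longrightarrow>
      0 < r \<longrightarrow> 0 < \<delta> \<longrightarrow> \<alpha> \<le> - g \<longrightarrow> real q + 2 \<le> g * lam0 \<longrightarrow>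
      fine_cover (real DIM('a) - 1) \<delta> (active_piece g \<alpha> P (strip \<gamma> lam0 p r))
        (K P * (1 / lam \<gamma> lam0 k) * (1 / lam0) * r ^ (DIM('a) - 3))" for P
    unfolding bound_def by blast+
  show thesis
  proof (rule that)
    show "0 \<le> K P" for P by (rule K(1))
    fix P :: "nat set" and \<gamma> lam0 :: real and p :: 'a and r g \<alpha> \<delta> :: real
    assume "has_ascent_direction P" and hyps: "0 < \<gamma>" "\<gamma> \<le> 1" "0 < lam0" "0 < r" "0 < \<delta>" "\<alpha> \<le> - g"
      "real q + 2 \<le> g * lam0"
    then show "fine_cover (real DIM('a) - 1) \<delta> (active_piece g \<alpha> P (strip \<gamma> lam0 p r))
        (K P * (1 / lam \<gamma> lam0 k) * (1 / lam0) * r ^ (DIM('a) - 3))"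
      using K(2)[OF \<open>has_ascent_direction P\<close>] by blast
  qed
qed

lemma non_ascent_piece_empty:
  assumes near: "\<And>x P. x \<in> \<Omega> \<Longrightarrow> - \<tau> < u k x \<Longrightarrow> (\<And>m. m \<in> P \<Longrightarrow> m < k \<Longrightarrow> - \<tau> < u m x) \<Longrightarrow>
      \<exists>m\<in>P. m < k \<Longrightarrow> has_ascent_direction P"
    and "\<not> has_ascent_direction P" "- \<tau> < \<alpha>" "\<alpha> \<le> - g" "2 / lam0 < \<tau>" "real q + 2 \<le> g * lam0"
    and "0 < lam0" "0 < \<gamma>" "\<gamma> \<le> 1"
  shows "active_piece g \<alpha> P (strip \<gamma> lam0 p r) = {}"
proof (rule equals0I)
  fix x assume x: "x \<in> active_piece g \<alpha> P (strip \<gamma> lam0 p r)"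
  have "gap_split q P \<alpha> g (\<lambda>m. u m x)" using x by (simp add: active_piece_def)
  then have "- \<tau> < u m x" if "m \<in> P" "m < k" for m
  proof -
    have "m \<le> q" using that(2) ijk by simp
    then have "\<alpha> \<le> u m x" using \<open>gap_split q P \<alpha> g (\<lambda>m. u m x)\<close> that(1) by (simp add: gap_split_def)
    then show ?thesis using \<open>- \<tau> < \<alpha>\<close> by linarith
  qed
  moreover have "- \<tau> < u k x"
    using x \<open>2 / lam0 < \<tau>\<close> divide_lam_le[OF assms(7-9), of 2 k]
    by (auto simp: active_piece_def strip_def)
  moreover have "\<exists>m\<in>P. m < k"
    using piece_has_active_index[OF x assms(4,6-9)] ijk by force
  moreover have "x \<in> \<Omega>" using x by (simp add: active_piece_def strip_def)
  ultimately show False using near assms(2) by blast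
qed

lemma strip_bound_at_corner:
  assumes corner: "u i z = 0" "u j z = 0" "u k z = 0"
  obtains C lbar where "\<And>\<gamma> lam0 p r. 0 < \<gamma> \<Longrightarrow> \<gamma> \<le> 1 \<Longrightarrow> lbar \<le> lam0 \<Longrightarrow> 1 / lam0 \<le> r \<Longrightarrow>
    hausdorff_measure (real DIM('a) - 1) (strip \<gamma> lam0 p r)
      \<le> ennreal (C * (1 / lam \<gamma> lam0 k) * (1 / lam0) * r ^ (DIM('a) - 3))"
proof -
  obtain \<tau> where \<tau>: "0 < \<tau>" "\<And>x P. x \<in> \<Omega> \<Longrightarrow> - \<tau> < u k x \<Longrightarrow> (\<And>m. m \<in> P \<Longrightarrow> m < k \<Longrightarrow> - \<tau> < u m x) \<Longrightarrow>
      \<exists>m\<in>P. m < k \<Longrightarrow> has_ascent_direction P"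
    using near_corner_ascent_direction by blast
  obtain K where K: "\<And>P. 0 \<le> K P"
    "\<And>P \<gamma> lam0 p r g \<alpha> \<delta>. has_ascent_direction P \<Longrightarrow> 0 < \<gamma> \<Longrightarrow> \<gamma> \<le> 1 \<Longrightarrow> 0 < lam0 \<Longrightarrow> 0 < r \<Longrightarrow> 0 < \<delta> \<Longrightarrow>
      \<alpha> \<le> - g \<Longrightarrow> real q + 2 \<le> g * lam0 \<Longrightarrow> fine_cover (real DIM('a) - 1) \<delta>
        (active_piece g \<alpha> P (strip \<gamma> lam0 p r)) (K P * (1 / lam \<gamma> lam0 k) * (1 / lam0) * r ^ (DIM('a) - 3))"
    using piece_cover_constants[OF corner] by blast
  define g where "g = \<tau> / (2 * real q + 4)"
  have "0 < g" using \<tau>(1) by (simp add: g_def)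
  define C where "C = hausdorff_const (real DIM('a) - 1) * (real (q + 2) * (\<Sum>P\<in>Pow {0..q}. K P))"
  show thesis
  proof (rule that[where C=C and lbar="(real q + 2) / g"])
    fix \<gamma> lam0 :: real and p :: 'a and r :: real
    assume \<gamma>: "0 < \<gamma>" "\<gamma> \<le> 1" and "(real q + 2) / g \<le> lam0" "1 / lam0 \<le> r"
    then have g: "real q + 2 \<le> g * lam0" using \<open>0 < g\<close> by (simp add: field_simps)
    then have "0 < lam0" using \<open>0 < g\<close> by (smt (verit) of_nat_0_le_iff zero_less_mult_iff)
    then have "0 < r" using \<open>1 / lam0 \<le> r\<close> by (smt (verit) divide_pos_pos)
    have "2 / lam0 < \<tau>"
    proof -
      have "(real q + 2) * (2 * real q + 4) \<le> \<tau> * lam0" using g by (simp add: g_def field_simps)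
      moreover have "2 * 4 \<le> (real q + 2) * (2 * real q + 4)" by (intro mult_mono) auto
      ultimately have "2 < \<tau> * lam0" by linarith
      then show ?thesis using \<open>0 < lam0\<close> by (simp add: field_simps)
    qed
    define X where "X = (1 / lam \<gamma> lam0 k) * (1 / lam0) * r ^ (DIM('a) - 3)"
    have "0 < lam \<gamma> lam0 k" by (rule lam_pos[OF \<open>0 < lam0\<close> \<gamma>])
    then have "0 \<le> X" using \<open>0 < lam0\<close> \<open>0 < r\<close> by (simp add: X_def)
    have piece: "fine_cover (real DIM('a) - 1) \<delta> (active_piece g (- (2 * real s + 1) * g) P
        (strip \<gamma> lam0 p r)) (K P * X)" if "s \<le> q + 1" "0 < \<delta>" for s P \<delta>
    proof -
      have "g \<le> (2 * real s + 1) * g" using \<open>0 < g\<close> by (simp add: distrib_right)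
      then have \<alpha>: "- (2 * real s + 1) * g \<le> - g" by (simp only: minus_mult_left neg_le_iff_le)
      have "(2 * real s + 1) * g \<le> (2 * real q + 3) * g"
        using that(1) \<open>0 < g\<close> by (intro mult_right_mono) auto
      also have "\<dots> < \<tau>" using \<open>0 < g\<close> by (simp add: g_def field_simps)
      finally have \<tau>\<alpha>: "- \<tau> < - (2 * real s + 1) * g" by (simp only: minus_mult_left neg_less_iff_less)
      show ?thesis
      proof (cases "has_ascent_direction P")
        case True
        then show ?thesis
          using K(2)[OF True \<gamma> \<open>0 < lam0\<close> \<open>0 < r\<close> \<open>0 < \<delta>\<close> \<alpha> g] by (simp add: X_def mult.assoc)
      next
        case False
        have "active_piece g (- (2 * real s + 1) * g) P (strip \<gamma> lam0 p r) = {}"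
          using non_ascent_piece_empty[OF \<tau>(2) False \<tau>\<alpha> \<alpha> \<open>2 / lam0 < \<tau>\<close> g \<open>0 < lam0\<close> \<gamma>] .
        then show ?thesis using K(1) \<open>0 \<le> X\<close> by (simp add: fine_cover_empty)
      qed
    qed
    define J where "J = {0..q+1} \<times> Pow {0..q}"
    have "hausdorff_measure (real DIM('a) - 1) (strip \<gamma> lam0 p r)
        \<le> ennreal (hausdorff_const (real DIM('a) - 1) * (\<Sum>(s, P)\<in>J. K P * X))"
    proof (rule hausdorff_measure_le)
      fix \<delta> :: real assume "0 < \<delta>"
      have "fine_cover (real DIM('a) - 1) \<delta>
          (\<Union>(s, P)\<in>J. active_piece g (- (2 * real s + 1) * g) P (strip \<gamma> lam0 p r)) (\<Sum>(s, P)\<in>J. K P * X)"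
        using piece \<open>0 < \<delta>\<close> by (intro fine_cover_UN) (auto simp: J_def)
      then show "fine_cover (real DIM('a) - 1) \<delta> (strip \<gamma> lam0 p r) (\<Sum>(s, P)\<in>J. K P * X)"
        using strip_subset_pieces[OF \<open>0 < g\<close>] unfolding J_def by (rule fine_cover_mono)
    qed simp
    also have "(\<Sum>(s, P)\<in>J. K P * X) = real (q + 2) * (\<Sum>P\<in>Pow {0..q}. K P) * X"
      unfolding J_def by (simp add: sum.cartesian_product[symmetric] sum_distrib_right)
    finally show "hausdorff_measure (real DIM('a) - 1) (strip \<gamma> lam0 p r)
        \<le> ennreal (C * (1 / lam \<gamma> lam0 k) * (1 / lam0) * r ^ (DIM('a) - 3))"
      by (simp add: C_def X_def mult.assoc)
  qed
qed

lemma strip_bound: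
  "\<exists>C. \<forall>\<gamma>. 0 < \<gamma> \<and> \<gamma> < 1/2 \<longrightarrow> (\<exists>lbar. \<forall>lam0 \<ge> lbar. \<forall>p r. 1 / lam0 \<le> r \<and> r \<le> 1 \<longrightarrow>
     hausdorff_measure (real DIM('a) - 1) (strip \<gamma> lam0 p r)
       \<le> ennreal (C * (1 / lam \<gamma> lam0 k) * (1 / lam0) * r ^ (DIM('a) - 3)))"
proof (cases "\<exists>z\<in>\<Omega>. u i z = 0 \<and> u j z = 0 \<and> u k z = 0")
  case True
  then obtain z where "u i z = 0" "u j z = 0" "u k z = 0" by blast
  then show ?thesis
  proof (rule strip_bound_at_corner)
    fix C lbar
    assume bound: "\<And>\<gamma> lam0 p r. 0 < \<gamma> \<Longrightarrow> \<gamma> \<le> 1 \<Longrightarrow> lbar \<le> lam0 \<Longrightarrow> 1 / lam0 \<le> r \<Longrightarrow>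
      hausdorff_measure (real DIM('a) - 1) (strip \<gamma> lam0 p r)
        \<le> ennreal (C * (1 / lam \<gamma> lam0 k) * (1 / lam0) * r ^ (DIM('a) - 3))"
    show ?thesis
    proof (rule exI[of _ C], intro allI impI)
      fix \<gamma> :: real assume "0 < \<gamma> \<and> \<gamma> < 1/2"
      then show "\<exists>lbar. \<forall>lam0 \<ge> lbar. \<forall>p r. 1 / lam0 \<le> r \<and> r \<le> 1 \<longrightarrow>
        hausdorff_measure (real DIM('a) - 1) (strip \<gamma> lam0 p r)
          \<le> ennreal (C * (1 / lam \<gamma> lam0 k) * (1 / lam0) * r ^ (DIM('a) - 3))"
        using bound by (intro exI[of _ lbar]) simp
    qed
  qed
next
  case False
  then show ?thesis
  proof (rule strip_empty_away_from_corner)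
    fix lbar
    assume empty: "\<And>\<gamma> lam0 p r. 0 < \<gamma> \<Longrightarrow> \<gamma> \<le> 1 \<Longrightarrow> lbar \<le> lam0 \<Longrightarrow> strip \<gamma> lam0 p r = {}"
    have empty_measure:
      "hausdorff_measure (real DIM('a) - 1) ({} :: 'a set) \<le> ennreal (hausdorff_const (real DIM('a) - 1) * 0)"
      by (rule hausdorff_measure_le) (simp_all add: fine_cover_empty)
    show ?thesis
    proof (rule exI[of _ 0], intro allI impI)
      fix \<gamma> :: real assume "0 < \<gamma> \<and> \<gamma> < 1/2"
      then show "\<exists>lbar. \<forall>lam0 \<ge> lbar. \<forall>p r. 1 / lam0 \<le> r \<and> r \<le> 1 \<longrightarrow>
        hausdorff_measure (real DIM('a) - 1) (strip \<gamma> lam0 p r)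
          \<le> ennreal (0 * (1 / lam \<gamma> lam0 k) * (1 / lam0) * r ^ (DIM('a) - 3))"
        using empty empty_measure by (intro exI[of _ lbar]) simp
    qed
  qed
qed

end

theorem lemma2p13:
  fixes u :: "nat \<Rightarrow> 'a::euclidean_space \<Rightarrow> real"
    and N :: "nat \<Rightarrow> 'a"
    and q i j k :: nat
    and \<eta> :: "real \<Rightarrow> real"
    and \<Omega> :: "'a set"
  assumes dim: "DIM('a) \<ge> 3"
    and affine: "\<forall>m\<le>q. \<exists>c. \<forall>x. u m x = N m \<bullet> x + c"
    and unit: "\<forall>m\<le>q. norm (N m) = 1"
    and Omega_def: "\<Omega> = (\<Inter>m\<in>{0..q}. {x. u m x \<le> 0})"
    and compact: "compact \<Omega>"
    and interior: "interior \<Omega> \<noteq> {}"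
    and cond_a: "\<forall>l\<le>q. \<exists>x. u l x > 0 \<and> (\<forall>m\<le>q. m \<noteq> l \<longrightarrow> u m x \<le> 0)"
    and cond_c: "\<forall>a b. a < b \<and> b \<le> q \<and> (\<exists>x\<in>\<Omega>. u a x = 0 \<and> u b x = 0) \<longrightarrow> N a \<bullet> N b \<le> 0"
    and eta_smooth: "\<forall>m x. ((deriv ^^ m) \<eta> has_real_derivative (deriv ^^ Suc m) \<eta> x) (at x)"
    and eta_even: "\<forall>t. \<eta> (- t) = \<eta> t"
    and eta_abs: "\<forall>t. \<bar>t\<bar> \<ge> 1/2 \<longrightarrow> \<eta> t = \<bar>t\<bar>"
    and eta_convex: "\<forall>t. (deriv ^^ 2) \<eta> t \<ge> 0"
    and idx: "i \<le> q" "j \<le> q" "k \<le> q" "i \<noteq> j" "j \<noteq> k" "i \<noteq> k" "k \<ge> 1"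
  shows "\<exists>C::real. \<forall>\<gamma>. 0 < \<gamma> \<and> \<gamma> < 1/2 \<longrightarrow>
           (\<exists>lbar. \<forall>lam0 \<ge> lbar. \<forall>p r. 1 / lam0 \<le> r \<and> r \<le> 1 \<longrightarrow>
              hausdorff_measure (real (DIM('a)) - 1)
                (\<Omega> \<inter> {x. uhat \<eta> \<gamma> lam0 u k x = 0}
                   \<inter> {x. - 2 / lam \<gamma> lam0 k \<le> uhat \<eta> \<gamma> lam0 u (k - 1) x \<and> uhat \<eta> \<gamma> lam0 u (k - 1) x \<le> 0}
                   \<inter> {x. - 2 / lam \<gamma> lam0 k \<le> u k x \<and> u k x \<le> 0}
                   \<inter> {x. - 4 / lam0 \<le> u j x \<and> u j x \<le> 0}
                   \<inter> {x. - 6 / lam0 \<le> u i x \<and> u i x \<le> 0}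
                   \<inter> ball p r)
              \<le> ennreal (C * (1 / lam \<gamma> lam0 k) * (1 / lam0) * r ^ (DIM('a) - 3)))"
proof -
  interpret polytope_corner \<eta> u N q i j k \<Omega>
  proof
    show "\<bar>\<eta> x - \<eta> y\<bar> \<le> \<bar>x - y\<bar>" for x y
      by (rule smooth_convex_abs_lipschitz[OF eta_smooth eta_abs eta_convex])
    show "\<eta> t = \<bar>t\<bar>" if "1/2 \<le> \<bar>t\<bar>" for t using eta_abs that by simp
    show "u m x - u m y = N m \<bullet> (x - y)" if "m \<le> q" for m x y
      using affine that by (force simp: inner_diff_right)
    show "norm (N m) = 1" if "m \<le> q" for m using unit that by simp
    show "\<exists>x. 0 < u l x \<and> (\<forall>m\<le>q. m \<noteq> l \<longrightarrow> u m x \<le> 0)" if "l \<le> q" for l using cond_a that by simp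
    show "N a \<bullet> N b \<le> 0" if "a < b" "b \<le> q" "x \<in> \<Omega>" "u a x = 0" "u b x = 0" for a b x
      using cond_c that by blast
  qed (fact Omega_def compact interior idx)+
  show ?thesis using strip_bound unfolding strip_def .
qed

end
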